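(* Let $G$, $K$, the faces $F_1,\dots,F_c$, the domain $\mathcal{D}_G$, the functions $\mathcal{A}_k$ and the sets $\mathcal{Q}(\vec q)$ be as in the context, and fix $\vec q=(q_1,\dots,q_c)\in\mathbb{Z}^c$. For every $\vec\varepsilon\in\mathcal{Q}(\vec q)$ there is a configuration $\theta\in\mathbb{R}^n$, unique up to the equivalence described in the context, such that for every edge $e$ and every bounded face $F_k$ whose counterclockwise boundary traversal passes through $e$ from vertex $a$ to vertex $b$, one has $\Delta_{ab}=\delta_k(e;\vec\varepsilon)$. This configuration is a stable fixed point with all angle differences in $[-\pi/2,\pi/2]$ and with winding vector $\vec q$. The resulting map from $\mathcal{Q}(\vec q)$ to the set of (equivalence classes of) stable fixed points with all angle differences in $[-\pi/2,\pi/2]$ and winding vector $\vec q$ is a bijection.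
   Context: Let $G$ be a finite connected planar graph with vertices $1,\dots,n$ and $m$ edges, such that every edge of $G$ lies on at least one cycle of $G$, and fix a planar embedding of $G$. Let $F_1,\dots,F_c$ ($c=m-n+1$) be the bounded faces of the embedding; each edge borders exactly two faces (possibly one of them the unbounded one). For $k\neq \ell$ let $m_{k\ell}$ be the number of edges bordering both $F_k$ and $F_\ell$, let $m_k$ be the number of edges bordering $F_k$ and the unbounded face, and let $n_k=m_k+\sum_{\ell\neq k}m_{k\ell}$ be the number of edges on the boundary of $F_k$. Fix a coupling constant $K>0$ and consider the Kuramoto model $\dot\theta_i=-K\sum_{j\sim i}\sin(\theta_i-\theta_j)$, $i=1,\dots,n$ ($j\sim i$ means $j$ is adjacent to $i$). A fixed point is $\theta\in\mathbb{R}^n$ with $\sum_{j\sim i}\sin(\theta_i-\theta_j)=0$ for all $i$; two configurations are considered equal if they differ by adding one common constant to all $\theta_i$ and/or integer multiples of $2\pi$ to individual $\theta_i$. For adjacent $i,j$, $\Delta_{ij}$ denotes $\theta_i-\theta_j$ reduced modulo $2\pi$ into $(-\pi,\pi]$ (so $\Delta_{ji}=-\Delta_{ij}$ unless $\Delta_{ij}=\pi$). The stability matrix $M$ has entries $M_{ij}=K\cos(\theta_i-\theta_j)$ if $i\sim j$, $M_{ii}=-\sum_{k\sim i}K\cos(\theta_i-\theta_k)$, and $M_{ij}=0$ otherwise; a fixed point is stable if $M$ is negative semidefinite. The winding vector of a fixed point is $\vec q=(q_1,\dots,q_c)$, where $q_k=\frac{1}{2\pi}\sum \Delta_{ab}$,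 the sum running over the edges of the boundary of $F_k$ traversed counterclockwise, each edge traversed from $a$ to $b$; each $q_k$ is an integer. Define $\mathcal{D}_G=\{\vec\varepsilon\in\mathbb{R}^c: |\varepsilon_k|\le 1 \text{ whenever } m_k>0,\ |\varepsilon_k-\varepsilon_\ell|\le 1\text{ whenever } m_{k\ell}>0\}$. For $\vec\varepsilon\in\mathcal{D}_G$, an edge $e$ and a bounded face $F_k$ bordered by $e$, set $\delta_k(e;\vec\varepsilon)=\arcsin(\varepsilon_k)$ if the other face bordered by $e$ is the unbounded face and $\delta_k(e;\vec\varepsilon)=\arcsin(\varepsilon_k-\varepsilon_\ell)$ if it is $F_\ell$. Define $\mathcal{A}_k(\vec\varepsilon)=m_k\arcsin(\varepsilon_k)+\sum_{\ell\neq k}m_{k\ell}\arcsin(\varepsilon_k-\varepsilon_\ell)$ and, for $\vec q\in\mathbb{Z}^c$, $\mathcal{Q}(\vec q)=\{\vec\varepsilon\in\mathcal{D}_G:\mathcal{A}_k(\vec\varepsilon)=2\pi q_k\text{ for all }k=1,\dots,c\}$. *)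

theory Defs
  imports Complex_Main
begin

definition simple_graph :: "nat \<Rightarrow> (nat \<Rightarrow> nat \<Rightarrow> bool) \<Rightarrow> bool" where
  "simple_graph n adj \<longleftrightarrow>
     (\<forall>a b. adj a b \<longrightarrow> adj b a \<and> a \<noteq> b \<and> a \<in> {1..n} \<and> b \<in> {1..n})"

definition nbrs :: "(nat \<Rightarrow> nat \<Rightarrow> bool) \<Rightarrow> nat \<Rightarrow> nat set" where
  "nbrs adj i = {j. adj i j}"

definition edges :: "(nat \<Rightarrow> nat \<Rightarrow> bool) \<Rightarrow> nat set set" where
  "edges adj = {{a, b} | a b. adj a b}"

definition connected_graph :: "nat \<Rightarrow> (nat \<Rightarrow> nat \<Rightarrow> bool) \<Rightarrow> bool" where
  "connected_graph n adj \<longleftrightarrow> n \<ge> 1 \<and>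
     (\<forall>a\<in>{1..n}. \<forall>b\<in>{1..n}. (a, b) \<in> {(x, y). adj x y}\<^sup>*)"

definition edge_on_cycle :: "(nat \<Rightarrow> nat \<Rightarrow> bool) \<Rightarrow> nat \<Rightarrow> nat \<Rightarrow> bool" where
  "edge_on_cycle adj a b \<longleftrightarrow>
     (\<exists>vs. length vs \<ge> 3 \<and> distinct vs \<and>
        (\<forall>i<length vs. adj (vs ! i) (vs ! ((i + 1) mod length vs))) \<and>
        (\<exists>i<length vs. vs ! i = a \<and> vs ! ((i + 1) mod length vs) = b))"

definition every_edge_on_cycle :: "(nat \<Rightarrow> nat \<Rightarrow> bool) \<Rightarrow> bool" where
  "every_edge_on_cycle adj \<longleftrightarrow> (\<forall>a b. adj a b \<longrightarrow> edge_on_cycle adj a b)"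

text \<open>Darts = directed edges (a,b). rot v is the cyclic (clockwise) order of the
  neighbours of v; the face permutation sends dart (a,b) to (b, rot b a), so each
  face orbit traverses its face with the face on the left, i.e. bounded faces are
  traversed counterclockwise.\<close>

definition darts :: "(nat \<Rightarrow> nat \<Rightarrow> bool) \<Rightarrow> (nat \<times> nat) set" where
  "darts adj = {(a, b). adj a b}"

definition rotation_system :: "nat \<Rightarrow> (nat \<Rightarrow> nat \<Rightarrow> bool) \<Rightarrow> (nat \<Rightarrow> nat \<Rightarrow> nat) \<Rightarrow> bool" where
  "rotation_system n adj rot \<longleftrightarrow>
     (\<forall>v\<in>{1..n}. bij_betw (rot v) (nbrs adj v) (nbrs adj v) \<and>
        (\<forall>x\<in>nbrs adj v. \<forall>y\<in>nbrs adj v. \<exists>k. (rot v ^^ k) x = y))"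

definition face_perm :: "(nat \<Rightarrow> nat \<Rightarrow> nat) \<Rightarrow> nat \<times> nat \<Rightarrow> nat \<times> nat" where
  "face_perm rot d = (snd d, rot (snd d) (fst d))"

definition face_orbit :: "(nat \<Rightarrow> nat \<Rightarrow> nat) \<Rightarrow> nat \<times> nat \<Rightarrow> (nat \<times> nat) set" where
  "face_orbit rot d = {(face_perm rot ^^ k) d | k. True}"

definition faces :: "(nat \<Rightarrow> nat \<Rightarrow> bool) \<Rightarrow> (nat \<Rightarrow> nat \<Rightarrow> nat) \<Rightarrow> (nat \<times> nat) set set" where
  "faces adj rot = face_orbit rot ` darts adj"

text \<open>Plane embedding with unbounded face Fout and bounded faces F 1, ..., F c,
  c = m - n + 1. Together with the rotation system this gives #faces = m - n + 2,
  i.e. genus 0 by Euler's formula (planarity). The case m = 0 (single vertex, no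
  faces as dart orbits) is allowed.\<close>
definition plane_embedding ::
  "nat \<Rightarrow> (nat \<Rightarrow> nat \<Rightarrow> bool) \<Rightarrow> (nat \<Rightarrow> nat \<Rightarrow> nat) \<Rightarrow> (nat \<times> nat) set \<Rightarrow> nat
     \<Rightarrow> (nat \<Rightarrow> (nat \<times> nat) set) \<Rightarrow> bool" where
  "plane_embedding n adj rot Fout c F \<longleftrightarrow>
     int c = int (card (edges adj)) - int n + 1 \<and>
     inj_on F {1..c} \<and> Fout \<notin> F ` {1..c} \<and>
     faces adj rot - {Fout} = F ` {1..c} \<and>
     (Fout \<in> faces adj rot \<or> edges adj = {})"

definition borders :: "nat set \<Rightarrow> (nat \<times> nat) set \<Rightarrow> bool" where
  "borders e Fc \<longleftrightarrow> (\<exists>(a, b)\<in>Fc. e = {a, b})"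

definition m_out :: "(nat \<Rightarrow> nat \<Rightarrow> bool) \<Rightarrow> (nat \<times> nat) set \<Rightarrow> (nat \<Rightarrow> (nat \<times> nat) set) \<Rightarrow> nat \<Rightarrow> nat" where
  "m_out adj Fout F k = card {e \<in> edges adj. borders e (F k) \<and> borders e Fout}"

definition m_pair :: "(nat \<Rightarrow> nat \<Rightarrow> bool) \<Rightarrow> (nat \<Rightarrow> (nat \<times> nat) set) \<Rightarrow> nat \<Rightarrow> nat \<Rightarrow> nat" where
  "m_pair adj F k l = card {e \<in> edges adj. borders e (F k) \<and> borders e (F l)}"

section \<open>The sets D_G, A_k, Q(q); vectors in R^c are functions vanishing outside 1..c\<close>

definition domain_D ::
  "(nat \<Rightarrow> nat \<Rightarrow> bool) \<Rightarrow> (nat \<times> nat) set \<Rightarrow> (nat \<Rightarrow> (nat \<times> nat) set) \<Rightarrow> nat \<Rightarrow> (nat \<Rightarrow> real) set" where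
  "domain_D adj Fout F c = {\<epsilon>. (\<forall>k. k \<notin> {1..c} \<longrightarrow> \<epsilon> k = 0) \<and>
      (\<forall>k\<in>{1..c}. m_out adj Fout F k > 0 \<longrightarrow> \<bar>\<epsilon> k\<bar> \<le> 1) \<and>
      (\<forall>k\<in>{1..c}. \<forall>l\<in>{1..c}. k \<noteq> l \<and> m_pair adj F k l > 0 \<longrightarrow> \<bar>\<epsilon> k - \<epsilon> l\<bar> \<le> 1)}"

definition calA ::
  "(nat \<Rightarrow> nat \<Rightarrow> bool) \<Rightarrow> (nat \<times> nat) set \<Rightarrow> (nat \<Rightarrow> (nat \<times> nat) set) \<Rightarrow> nat
     \<Rightarrow> (nat \<Rightarrow> real) \<Rightarrow> nat \<Rightarrow> real" where
  "calA adj Fout F c \<epsilon> k = real (m_out adj Fout F k) * arcsin (\<epsilon> k) +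
      (\<Sum>l\<in>{1..c} - {k}. real (m_pair adj F k l) * arcsin (\<epsilon> k - \<epsilon> l))"

definition calQ ::
  "(nat \<Rightarrow> nat \<Rightarrow> bool) \<Rightarrow> (nat \<times> nat) set \<Rightarrow> (nat \<Rightarrow> (nat \<times> nat) set) \<Rightarrow> nat
     \<Rightarrow> (nat \<Rightarrow> int) \<Rightarrow> (nat \<Rightarrow> real) set" where
  "calQ adj Fout F c q = {\<epsilon> \<in> domain_D adj Fout F c.
      \<forall>k\<in>{1..c}. calA adj Fout F c \<epsilon> k = 2 * pi * of_int (q k)}"

text \<open>Reduction modulo 2 pi into (-pi, pi].\<close>
definition wrap :: "real \<Rightarrow> real" where
  "wrap x = x - 2 * pi * of_int \<lceil>(x - pi) / (2 * pi)\<rceil>"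

definition Delta :: "(nat \<Rightarrow> real) \<Rightarrow> nat \<Rightarrow> nat \<Rightarrow> real" where
  "Delta \<theta> a b = wrap (\<theta> a - \<theta> b)"

definition edge_cond ::
  "(nat \<times> nat) set \<Rightarrow> (nat \<Rightarrow> (nat \<times> nat) set) \<Rightarrow> nat \<Rightarrow> (nat \<Rightarrow> real) \<Rightarrow> (nat \<Rightarrow> real) \<Rightarrow> bool" where
  "edge_cond Fout F c \<epsilon> \<theta> \<longleftrightarrow>
     (\<forall>k\<in>{1..c}. \<forall>(a, b)\<in>F k.
        (borders {a, b} Fout \<longrightarrow> Delta \<theta> a b = arcsin (\<epsilon> k)) \<and>
        (\<forall>l\<in>{1..c}. l \<noteq> k \<and> borders {a, b} (F l) \<longrightarrow> Delta \<theta> a b = arcsin (\<epsilon> k - \<epsilon> l)))"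

definition fixed_point :: "nat \<Rightarrow> (nat \<Rightarrow> nat \<Rightarrow> bool) \<Rightarrow> (nat \<Rightarrow> real) \<Rightarrow> bool" where
  "fixed_point n adj \<theta> \<longleftrightarrow> (\<forall>i\<in>{1..n}. (\<Sum>j\<in>nbrs adj i. sin (\<theta> i - \<theta> j)) = 0)"

definition stab_matrix :: "(nat \<Rightarrow> nat \<Rightarrow> bool) \<Rightarrow> real \<Rightarrow> (nat \<Rightarrow> real) \<Rightarrow> nat \<Rightarrow> nat \<Rightarrow> real" where
  "stab_matrix adj K \<theta> i j =
     (if adj i j then K * cos (\<theta> i - \<theta> j)
      else if i = j then - (\<Sum>k\<in>nbrs adj i. K * cos (\<theta> i - \<theta> k))
      else 0)"

definition stable :: "nat \<Rightarrow> (nat \<Rightarrow> nat \<Rightarrow> bool) \<Rightarrow> real \<Rightarrow> (nat \<Rightarrow> real) \<Rightarrow> bool" where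
  "stable n adj K \<theta> \<longleftrightarrow>
     (\<forall>x :: nat \<Rightarrow> real. (\<Sum>i\<in>{1..n}. \<Sum>j\<in>{1..n}. x i * stab_matrix adj K \<theta> i j * x j) \<le> 0)"

definition angles_bounded :: "(nat \<Rightarrow> nat \<Rightarrow> bool) \<Rightarrow> (nat \<Rightarrow> real) \<Rightarrow> bool" where
  "angles_bounded adj \<theta> \<longleftrightarrow> (\<forall>a b. adj a b \<longrightarrow> - (pi / 2) \<le> Delta \<theta> a b \<and> Delta \<theta> a b \<le> pi / 2)"

definition winding :: "(nat \<Rightarrow> (nat \<times> nat) set) \<Rightarrow> (nat \<Rightarrow> real) \<Rightarrow> nat \<Rightarrow> real" where
  "winding F \<theta> k = (\<Sum>(a, b)\<in>F k. Delta \<theta> a b) / (2 * pi)"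

definition has_winding :: "nat \<Rightarrow> (nat \<Rightarrow> (nat \<times> nat) set) \<Rightarrow> (nat \<Rightarrow> real) \<Rightarrow> (nat \<Rightarrow> int) \<Rightarrow> bool" where
  "has_winding c F \<theta> q \<longleftrightarrow> (\<forall>k\<in>{1..c}. winding F \<theta> k = of_int (q k))"

definition cfg_equiv :: "nat \<Rightarrow> (nat \<Rightarrow> real) \<Rightarrow> (nat \<Rightarrow> real) \<Rightarrow> bool" where
  "cfg_equiv n \<theta> \<theta>' \<longleftrightarrow> (\<exists>C. \<forall>i\<in>{1..n}. \<exists>z :: int. \<theta>' i = \<theta> i + C + 2 * pi * of_int z)"

definition cfg_rel :: "nat \<Rightarrow> ((nat \<Rightarrow> real) \<times> (nat \<Rightarrow> real)) set" where
  "cfg_rel n = {(\<theta>, \<theta>'). cfg_equiv n \<theta> \<theta>'}"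

end

theory Submission
  imports Defs "HOL-Library.Function_Algebras"
begin

text \<open>A configuration with all phase differences in \<open>[-\<pi>/2, \<pi>/2]\<close> is determined, up to
  equivalence, by the flow \<open>sin \<Delta>\<close> on the darts, which at a fixed point is divergence free.
  By Euler's formula \<open>c + (n - 1) = m\<close>, every flow splits orthogonally into the dual gradient
  of a face potential and the gradient of a vertex potential. Hence divergence free flows are
  exactly dual gradients, \<open>sin \<Delta>\<^sub>a\<^sub>b = \<epsilon>(left face) - \<epsilon>(right face)\<close> with \<open>\<epsilon> = 0\<close> on the
  unbounded face, and the winding condition puts \<open>\<epsilon>\<close> into \<open>\<Q>(q)\<close>. Conversely, for
  \<open>\<epsilon> \<in> \<Q>(q)\<close> the flow \<open>arcsin (\<epsilon>(left) - \<epsilon>(right))\<close> has circulation \<open>2\<pi>q\<^sub>k\<close> around \<open>F\<^sub>k\<close>;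
  minus \<open>2\<pi>\<close> times an integer flow with the same circulations it is a flow without
  circulation, i.e. a gradient \<open>\<theta>\<^sub>a - \<theta>\<^sub>b\<close>. All \<open>cos \<Delta> \<ge> 0\<close> then gives stability.
  Two face potentials with the same angle flow agree since a dual gradient determines
  its potential, and two solutions \<open>\<theta>\<close> differ by a constant modulo \<open>2\<pi>\<close> by connectivity.\<close>

interpretation fun_vs: vector_space "\<lambda>(r::real) (f::'a \<Rightarrow> real) x. r * f x"
  by unfold_locales (auto simp: fun_eq_iff algebra_simps)

lemma sum_fun_apply: "finite I \<Longrightarrow> (\<Sum>i\<in>I. f i) x = (\<Sum>i\<in>I. f i x)"
  by (induction I rule: finite_induct) auto

lemma linear_dependence_of_card_gt:
  fixes u :: "'i \<Rightarrow> 'a \<Rightarrow> real"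
  assumes I: "finite I" and S: "finite S"
    and span: "\<And>i. i \<in> I \<Longrightarrow> u i \<in> fun_vs.span S"
    and card: "card S < card I"
  shows "\<exists>a. (\<forall>x. (\<Sum>i\<in>I. a i * u i x) = 0) \<and> (\<exists>i\<in>I. a i \<noteq> 0)"
proof (rule ccontr)
  assume "\<not> ?thesis"
  then have ind: "\<And>a. \<forall>x. (\<Sum>i\<in>I. a i * u i x) = 0 \<Longrightarrow> \<forall>i\<in>I. a i = 0"
    by blast
  have inj: "inj_on u I"
  proof (rule inj_onI, rule ccontr)
    fix i j assume ij: "i \<in> I" "j \<in> I" "u i = u j" "i \<noteq> j"
    let ?a = "\<lambda>k. if k = i then 1 else if k = j then -1 else (0::real)"
    have "(\<Sum>k\<in>I. ?a k * u k x) = (\<Sum>k\<in>{i,j}. ?a k * u k x)" for x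
      using I ij by (intro sum.mono_neutral_right) auto
    with ij have "\<forall>x. (\<Sum>k\<in>I. ?a k * u k x) = 0" by simp
    from ind[OF this] ij show False by auto
  qed
  have "fun_vs.independent (u ` I)"
  proof
    assume "fun_vs.dependent (u ` I)"
    then obtain w where w: "\<exists>v\<in>u ` I. w v \<noteq> 0" "(\<Sum>v\<in>u ` I. (\<lambda>x. w v * v x)) = 0"
      using fun_vs.dependent_finite[of "u ` I"] I by auto
    have "(\<Sum>i\<in>I. w (u i) * u i x) = 0" for x
    proof -
      have "(\<Sum>i\<in>I. w (u i) * u i x) = (\<Sum>v\<in>u ` I. (\<lambda>x. w v * v x)) x"
        using sum.reindex[OF inj, of "\<lambda>v. w v * v x"] I by (simp add: sum_fun_apply)
      with w(2) show ?thesis by simp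
    qed
    with ind[of "w \<circ> u"] w(1) show False by auto
  qed
  moreover have "u ` I \<subseteq> fun_vs.span S" using span by auto
  ultimately have "card (u ` I) \<le> card S"
    using fun_vs.independent_span_bound[OF S] by blast
  with card card_image[OF inj] show False by simp
qed

lemma funpow_in: "f ` A \<subseteq> A \<Longrightarrow> x \<in> A \<Longrightarrow> (f ^^ k) x \<in> A"
  by (induction k) auto

lemma funpow_inj_on:
  assumes "inj_on f A" "f ` A \<subseteq> A" "x \<in> A" "y \<in> A" "(f ^^ k) x = (f ^^ k) y"
  shows "x = y"
  using assms(3-5)
proof (induction k arbitrary: x y)
  case (Suc k)
  have "(f ^^ k) (f x) = (f ^^ k) (f y)"
    using Suc.prems by (simp add: funpow_Suc_right del: funpow.simps)
  moreover have "f x \<in> A" "f y \<in> A" using Suc.prems assms(2) by auto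
  ultimately have "f x = f y" using Suc.IH by blast
  with assms(1) Suc.prems show ?case by (auto dest: inj_onD)
qed simp

lemma funpow_period:
  assumes inj: "inj_on f A" and sub: "f ` A \<subseteq> A" and fin: "finite A" and x: "x \<in> A"
  obtains p where "p > 0" "(f ^^ p) x = x"
proof -
  let ?g = "\<lambda>k. (f ^^ k) x"
  have "\<not> inj_on ?g {..card A}"
  proof
    assume "inj_on ?g {..card A}"
    moreover have "?g ` {..card A} \<subseteq> A" using funpow_in[OF sub x] by auto
    ultimately have "card {..card A} \<le> card A" using card_inj_on_le fin by blast
    then show False by simp
  qed
  then obtain i j where ij: "i < j" "?g i = ?g j"
    unfolding inj_on_def by (metis linorder_neqE_nat)
  have "(f ^^ i) ((f ^^ (j - i)) x) = (f ^^ (i + (j - i))) x"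
    by (simp add: funpow_add)
  with ij have "(f ^^ i) ((f ^^ (j - i)) x) = (f ^^ i) x" by simp
  then have "(f ^^ (j - i)) x = x"
    using funpow_inj_on[OF inj sub funpow_in[OF sub x] x] by blast
  moreover have "j - i > 0" using ij by simp
  ultimately show ?thesis by (rule that[rotated])
qed

lemma funpow_mult_period: "(f ^^ p) x = x \<Longrightarrow> (f ^^ (p * m)) x = x"
  by (induction m) (auto simp: funpow_add)

lemma Suc_mod_inj: "i < L \<Longrightarrow> j < L \<Longrightarrow> Suc i mod L = Suc j mod L \<Longrightarrow> i = j"
  by (simp add: mod_Suc split: if_splits)

lemma Suc_Suc_mod_neq: "i < L \<Longrightarrow> 3 \<le> L \<Longrightarrow> Suc (Suc i mod L) mod L \<noteq> i"
  by (simp add: mod_Suc split: if_splits)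

lemma bij_betw_Suc_mod: "0 < L \<Longrightarrow> bij_betw (\<lambda>i. Suc i mod L) {..<L} {..<L}"
proof -
  assume L: "0 < L"
  have inj: "inj_on (\<lambda>i. Suc i mod L) {..<L}" by (rule inj_onI) (auto intro: Suc_mod_inj)
  have "(\<lambda>i. Suc i mod L) ` {..<L} \<subseteq> {..<L}" using L by auto
  with endo_inj_surj[OF _ this inj] inj show ?thesis by (simp add: bij_betw_def)
qed

lemma wrap_eq_self: assumes "- pi < x" "x \<le> pi" shows "wrap x = x"
proof -
  have "(x - pi) / (2 * pi) \<le> 0" using assms by (intro divide_nonpos_pos) auto
  moreover have "-1 < (x - pi) / (2 * pi)" using assms by (simp add: field_simps)
  ultimately have "\<lceil>(x - pi) / (2 * pi)\<rceil> = 0" by (simp add: ceiling_eq_iff)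
  then show ?thesis by (simp add: wrap_def)
qed

lemma wrap_add_multiple: "wrap (x + 2 * pi * of_int z) = wrap x"
proof -
  have "(x + 2 * pi * of_int z - pi) / (2 * pi) = (x - pi) / (2 * pi) + of_int z"
    by (simp add: field_simps)
  then have "\<lceil>(x + 2 * pi * of_int z - pi) / (2 * pi)\<rceil> = \<lceil>(x - pi) / (2 * pi)\<rceil> + z"
    by simp
  then show ?thesis unfolding wrap_def by (simp add: algebra_simps)
qed

lemma wrap_decomp: obtains z :: int where "x = wrap x + 2 * pi * of_int z"
  by (simp add: wrap_def)

lemma sin_wrap [simp]: "sin (wrap x) = sin x"
proof -
  obtain z :: int where "x = wrap x + 2 * pi * of_int z" by (rule wrap_decomp)
  then show ?thesis by (metis sin_add sin_int_2pin cos_int_2pin mult_1_right mult_zero_right add_0_right)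
qed

lemma cos_wrap [simp]: "cos (wrap x) = cos x"
proof -
  obtain z :: int where "x = wrap x + 2 * pi * of_int z" by (rule wrap_decomp)
  then show ?thesis by (metis cos_add sin_int_2pin cos_int_2pin mult_1_right mult_zero_right diff_zero)
qed

lemma wrap_eq_imp_diff:
  assumes "wrap x = wrap y" obtains z :: int where "x - y = 2 * pi * of_int z"
proof -
  obtain z1 :: int where "x = wrap x + 2 * pi * of_int z1" by (rule wrap_decomp)
  moreover obtain z2 :: int where "y = wrap y + 2 * pi * of_int z2" by (rule wrap_decomp)
  ultimately have "x - y = 2 * pi * of_int (z1 - z2)" using assms by (simp add: algebra_simps)
  then show ?thesis by (rule that)
qed

lemma wrap_minus: assumes "- pi < wrap x" "wrap x < pi" shows "wrap (- x) = - wrap x"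
proof -
  obtain z :: int where "x = wrap x + 2 * pi * of_int z" by (rule wrap_decomp)
  then have "- x = - wrap x + 2 * pi * of_int (- z)" by simp
  then have "wrap (- x) = wrap (- wrap x)" by (metis wrap_add_multiple)
  also have "\<dots> = - wrap x" using assms by (intro wrap_eq_self) auto
  finally show ?thesis .
qed

section \<open>Darts and faces of a plane graph\<close>

locale plane_graph =
  fixes n c :: nat and adj :: "nat \<Rightarrow> nat \<Rightarrow> bool" and rot :: "nat \<Rightarrow> nat \<Rightarrow> nat"
    and Fout :: "(nat \<times> nat) set" and F :: "nat \<Rightarrow> (nat \<times> nat) set"
  assumes simple: "simple_graph n adj"
    and connected: "connected_graph n adj"
    and every_edge_on_cycle: "every_edge_on_cycle adj"
    and rotation: "rotation_system n adj rot"
    and embedding: "plane_embedding n adj rot Fout c F"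
    and darts_nonempty: "darts adj \<noteq> {}"
begin

abbreviation "D \<equiv> darts adj"
abbreviation "fp \<equiv> face_perm rot"
abbreviation "face \<equiv> face_orbit rot"

lemma adj_sym: "adj a b \<Longrightarrow> adj b a"
  using simple unfolding simple_graph_def by blast

lemma adj_bounds: "adj a b \<Longrightarrow> a \<in> {1..n} \<and> b \<in> {1..n} \<and> a \<noteq> b"
  using simple unfolding simple_graph_def by blast

lemma in_darts_iff: "d \<in> D \<longleftrightarrow> adj (fst d) (snd d)"
  by (cases d) (simp add: darts_def)

lemma finite_darts: "finite D"
proof -
  have "D \<subseteq> {1..n} \<times> {1..n}" using adj_bounds by (auto simp: in_darts_iff)
  then show ?thesis using finite_subset by blast
qed

lemma swap_in_darts_iff [simp]: "prod.swap d \<in> D \<longleftrightarrow> d \<in> D"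
  using adj_sym by (auto simp: in_darts_iff)

lemma swap_dart_neq: "d \<in> D \<Longrightarrow> prod.swap d \<noteq> d"
  using adj_bounds by (cases d) (auto simp: in_darts_iff)

lemma darts_Sigma: "D = Sigma {1..n} (nbrs adj)"
  using adj_bounds by (auto simp: in_darts_iff nbrs_def)

lemma in_nbrs_iff: "x \<in> nbrs adj v \<longleftrightarrow> adj v x"
  by (simp add: nbrs_def)

lemma finite_nbrs: "finite (nbrs adj v)"
proof -
  have "nbrs adj v \<subseteq> {1..n}" using adj_bounds by (auto simp: nbrs_def)
  then show ?thesis using finite_subset by blast
qed

lemma nbrs_empty: "v \<notin> {1..n} \<Longrightarrow> nbrs adj v = {}"
  using adj_bounds by (auto simp: nbrs_def)

lemma rot_bij: "bij_betw (rot v) (nbrs adj v) (nbrs adj v)"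
  using rotation nbrs_empty[of v] unfolding rotation_system_def
  by (cases "v \<in> {1..n}") (auto simp: bij_betw_def)

lemma rot_transitive: "x \<in> nbrs adj v \<Longrightarrow> y \<in> nbrs adj v \<Longrightarrow> \<exists>k. (rot v ^^ k) x = y"
  using rotation nbrs_empty unfolding rotation_system_def by (cases "v \<in> {1..n}") auto

lemma face_perm_pair [simp]: "fp (a, b) = (b, rot b a)"
  by (simp add: face_perm_def)

lemma face_perm_in_darts: "d \<in> D \<Longrightarrow> fp d \<in> D"
proof (cases d)
  case (Pair a b)
  assume "d \<in> D"
  with Pair have "a \<in> nbrs adj b" using adj_sym by (simp add: in_darts_iff in_nbrs_iff)
  then have "rot b a \<in> nbrs adj b" using rot_bij[of b] bij_betwE by blast
  with Pair show ?thesis by (simp add: in_darts_iff in_nbrs_iff)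
qed

lemma inj_on_face_perm: "inj_on fp D"
proof (rule inj_onI)
  fix d d' assume dd: "d \<in> D" "d' \<in> D" "fp d = fp d'"
  obtain a b a' b' where ab: "d = (a, b)" "d' = (a', b')" by fastforce
  have bb: "b = b'" and r: "rot b a = rot b a'" using dd ab by auto
  have "a \<in> nbrs adj b" "a' \<in> nbrs adj b"
    using dd ab bb adj_sym by (auto simp: in_darts_iff in_nbrs_iff)
  then have "a = a'" using r rot_bij[of b] by (auto simp: bij_betw_def dest: inj_onD)
  with ab bb show "d = d'" by simp
qed

lemma face_perm_image: "fp ` D \<subseteq> D"
  using face_perm_in_darts by blast

lemma face_subset_darts: "d \<in> D \<Longrightarrow> face d \<subseteq> D"
  unfolding face_orbit_def using funpow_in[OF face_perm_image] by blast

lemma finite_face: "d \<in> D \<Longrightarrow> finite (face d)"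
  using face_subset_darts finite_darts finite_subset by blast

lemma funpow_face_perm_in_face: "(fp ^^ k) d \<in> face d"
  unfolding face_orbit_def by blast

lemma dart_in_face: "d \<in> face d"
  using funpow_face_perm_in_face[of 0] by simp

lemma face_subset_of_mem: "d' \<in> face d \<Longrightarrow> face d' \<subseteq> face d"
proof
  fix x assume "d' \<in> face d" "x \<in> face d'"
  then obtain k j where "d' = (fp ^^ k) d" "x = (fp ^^ j) d'" by (auto simp: face_orbit_def)
  then have "x = (fp ^^ (j + k)) d" by (simp add: funpow_add)
  then show "x \<in> face d" by (simp add: funpow_face_perm_in_face)
qed

text \<open>Faces are orbits of a permutation of the finite set of darts, hence symmetric:
  some power of \<open>fp\<close> returns from \<open>d'\<close> to \<open>d\<close>.\<close>

lemma face_eq_of_mem: assumes d: "d \<in> D" and d': "d' \<in> face d" shows "face d' = face d"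
proof
  show "face d' \<subseteq> face d" using face_subset_of_mem[OF d'] .
  obtain k where k: "d' = (fp ^^ k) d" using d' by (auto simp: face_orbit_def)
  obtain p where p: "p > 0" "(fp ^^ p) d = d"
    using funpow_period[OF inj_on_face_perm face_perm_image finite_darts d] by blast
  have "(fp ^^ (p * k - k)) d' = (fp ^^ (p * k - k + k)) d" using k by (simp add: funpow_add)
  also have "\<dots> = d" using p funpow_mult_period[OF p(2)] by simp
  finally have "d \<in> face d'" by (metis funpow_face_perm_in_face)
  then show "face d \<subseteq> face d'" by (rule face_subset_of_mem)
qed

lemma face_face_perm: "d \<in> D \<Longrightarrow> face (fp d) = face d"
  using face_eq_of_mem[of d "fp d"] funpow_face_perm_in_face[of 1 d] by simp

lemma mem_face_iff: "d0 \<in> D \<Longrightarrow> x \<in> face d0 \<longleftrightarrow> x \<in> D \<and> face x = face d0"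
  using face_subset_darts face_eq_of_mem dart_in_face by blast

lemma bij_betw_face_perm_face: assumes d: "d \<in> D" shows "bij_betw fp (face d) (face d)"
proof -
  have "fp ` face d \<subseteq> face d"
    using d face_face_perm face_perm_in_darts by (auto simp: mem_face_iff)
  moreover have "inj_on fp (face d)"
    using inj_on_face_perm face_subset_darts[OF d] inj_on_subset by blast
  ultimately show ?thesis
    using endo_inj_surj[OF finite_face[OF d]] by (simp add: bij_betw_def)
qed

text \<open>Each face is a closed walk: its darts' heads are a permutation of their tails.\<close>

lemma face_sum_snd_eq_sum_fst:
  assumes d: "d \<in> D"
  shows "(\<Sum>x\<in>face d. g (snd x)) = (\<Sum>x\<in>face d. g (fst x))"
proof -
  have "(\<Sum>x\<in>face d. g (fst x)) = (\<Sum>x\<in>face d. g (fst (fp x)))"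
    using sum.reindex_bij_betw[OF bij_betw_face_perm_face[OF d], of "\<lambda>x. g (fst x)"] by simp
  also have "\<dots> = (\<Sum>x\<in>face d. g (snd x))" by (simp add: face_perm_def)
  finally show ?thesis by simp
qed

lemma edges_eq_image_darts: "edges adj = (\<lambda>d. {fst d, snd d}) ` D"
proof
  show "edges adj \<subseteq> (\<lambda>d. {fst d, snd d}) ` D"
  proof
    fix e assume "e \<in> edges adj"
    then obtain a b where "e = {a, b}" "adj a b" by (auto simp: edges_def)
    then show "e \<in> (\<lambda>d. {fst d, snd d}) ` D"
      by (intro image_eqI[of _ _ "(a, b)"]) (auto simp: in_darts_iff)
  qed
  show "(\<lambda>d. {fst d, snd d}) ` D \<subseteq> edges adj"
  proof
    fix e assume "e \<in> (\<lambda>d. {fst d, snd d}) ` D"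
    then obtain d where "d \<in> D" "e = {fst d, snd d}" by auto
    then show "e \<in> edges adj" unfolding edges_def in_darts_iff by blast
  qed
qed

lemma edge_of_dart: "d \<in> D \<Longrightarrow> {fst d, snd d} \<in> edges adj"
  using edges_eq_image_darts by blast

lemma Fout_in_faces: "Fout \<in> faces adj rot"
proof -
  have "edges adj \<noteq> {}" using darts_nonempty edges_eq_image_darts by simp
  then show ?thesis using embedding unfolding plane_embedding_def by blast
qed

lemma faces_eq: "faces adj rot = insert Fout (F ` {1..c})"
  using embedding Fout_in_faces unfolding plane_embedding_def by blast

lemma inj_on_F: "inj_on F {1..c}"
  using embedding unfolding plane_embedding_def by blast

lemma F_eq_iff: "k \<in> {1..c} \<Longrightarrow> l \<in> {1..c} \<Longrightarrow> F k = F l \<longleftrightarrow> k = l"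
  using inj_on_F by (auto dest: inj_onD)

lemma F_neq_Fout: "k \<in> {1..c} \<Longrightarrow> F k \<noteq> Fout"
  using embedding unfolding plane_embedding_def by blast

lemma in_faces_iff: "g \<in> faces adj rot \<longleftrightarrow> (\<exists>d\<in>D. g = face d)"
  by (auto simp: faces_def)

lemma F_eq_face: "k \<in> {1..c} \<Longrightarrow> \<exists>d\<in>D. F k = face d"
  using faces_eq in_faces_iff by blast

lemma Fout_eq_face: "\<exists>d\<in>D. Fout = face d"
  using Fout_in_faces in_faces_iff by blast

lemma face_cases: "d \<in> D \<Longrightarrow> face d = Fout \<or> (\<exists>k\<in>{1..c}. face d = F k)"
proof -
  assume "d \<in> D"
  then have "face d \<in> faces adj rot" using in_faces_iff by blast
  then show ?thesis using faces_eq by auto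
qed

lemma mem_faces_iff: "g \<in> faces adj rot \<Longrightarrow> x \<in> g \<longleftrightarrow> x \<in> D \<and> face x = g"
  using in_faces_iff mem_face_iff by metis

lemma mem_F_iff: "k \<in> {1..c} \<Longrightarrow> x \<in> F k \<longleftrightarrow> x \<in> D \<and> face x = F k"
  using F_eq_face mem_face_iff by metis

lemma mem_Fout_iff: "x \<in> Fout \<longleftrightarrow> x \<in> D \<and> face x = Fout"
  using Fout_eq_face mem_face_iff by metis

lemma finite_F: "k \<in> {1..c} \<Longrightarrow> finite (F k)"
  using F_eq_face finite_face by metis

lemma n_ge_1: "n \<ge> 1"
  using connected unfolding connected_graph_def by blast

lemma connected_induct:
  assumes "P 1" and "\<And>a b. adj a b \<Longrightarrow> P a \<Longrightarrow> P b" and "w \<in> {1..n}"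
  shows "P w"
proof -
  have "(1, w) \<in> {(x, y). adj x y}\<^sup>*"
    using connected n_ge_1 assms(3) unfolding connected_graph_def by auto
  then show ?thesis
    by (induction rule: rtrancl_induct) (use assms(1,2) in auto)
qed

text \<open>The darts whose face has the property are closed under reversal and under rotation
  at the tail, hence, by connectivity, they are all darts.\<close>

lemma face_induct:
  assumes Fout: "P Fout" and step: "\<And>d. d \<in> D \<Longrightarrow> P (face d) \<Longrightarrow> P (face (prod.swap d))"
    and d: "d \<in> D"
  shows "P (face d)"
proof -
  define X where "X = {d \<in> D. P (face d)}"
  have X_swap: "prod.swap e \<in> X" if "e \<in> X" for e
    using that step by (simp add: X_def)
  have X_rot: "(v, (rot v ^^ k) x) \<in> X" if "(v, x) \<in> X" for v x k
  proof (induction k)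
    case (Suc k)
    then have "(((rot v ^^ k) x), v) \<in> X" using X_swap by fastforce
    then have "fp ((rot v ^^ k) x, v) \<in> D" "face (fp ((rot v ^^ k) x, v)) = face ((rot v ^^ k) x, v)"
      using face_perm_in_darts face_face_perm by (auto simp: X_def)
    with \<open>(((rot v ^^ k) x), v) \<in> X\<close> show ?case by (simp add: X_def)
  qed (use that in simp)
  have X_all: "(v, y) \<in> X" if vx: "(v, x) \<in> X" and y: "y \<in> nbrs adj v" for v x y
  proof -
    have "x \<in> nbrs adj v" using vx by (simp add: X_def in_darts_iff in_nbrs_iff)
    then obtain k where "(rot v ^^ k) x = y" using rot_transitive y by blast
    then show ?thesis using X_rot[OF vx] by blast
  qed
  obtain d0 where d0: "d0 \<in> D" "Fout = face d0" using Fout_eq_face by blast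
  have d0X: "(fst d0, snd d0) \<in> X" using d0 Fout by (simp add: X_def)
  have reach: "\<forall>y\<in>nbrs adj v. (v, y) \<in> X" if "(fst d0, v) \<in> {(x, y). adj x y}\<^sup>*" for v
    using that
  proof (induction rule: rtrancl_induct)
    case base then show ?case using X_all d0X by blast
  next
    case (step u w)
    then have "(w, u) \<in> X" using X_swap[of "(u, w)"] by (simp add: in_nbrs_iff)
    then show ?case using X_all by blast
  qed
  have "fst d \<in> {1..n}" "fst d0 \<in> {1..n}" using d d0 adj_bounds by (auto simp: in_darts_iff)
  then have "(fst d0, fst d) \<in> {(x, y). adj x y}\<^sup>*"
    using connected unfolding connected_graph_def by blast
  moreover have "snd d \<in> nbrs adj (fst d)" using d by (simp add: in_darts_iff in_nbrs_iff)
  ultimately have "(fst d, snd d) \<in> X" using reach by blast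
  then show ?thesis by (simp add: X_def)
qed

end

section \<open>Flows, gradients and dual gradients\<close>

definition unit_flow :: "nat \<times> nat \<Rightarrow> nat \<times> nat \<Rightarrow> real" where
  "unit_flow d0 d = (if d = d0 then 1 else 0) - (if d = prod.swap d0 then 1 else 0)"

lemma unit_flow_swap: "unit_flow d0 (prod.swap d) = - unit_flow d0 d"
proof -
  have "prod.swap d = d0 \<longleftrightarrow> d = prod.swap d0" "prod.swap d = prod.swap d0 \<longleftrightarrow> d = d0"
    by (metis swap_swap)+
  then show ?thesis by (simp add: unit_flow_def)
qed

definition cycle_flow :: "nat list \<Rightarrow> nat \<times> nat \<Rightarrow> real" where
  "cycle_flow vs d = (\<Sum>i<length vs. unit_flow (vs ! i, vs ! (Suc i mod length vs)) d)"

lemma cycle_flow_edge: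
  assumes vs: "distinct vs" "3 \<le> length vs" and i0: "i0 < length vs"
  shows "cycle_flow vs (vs ! i0, vs ! (Suc i0 mod length vs)) = 1"
proof -
  define L where "L = length vs"
  have "unit_flow (vs ! i, vs ! (Suc i mod L)) (vs ! i0, vs ! (Suc i0 mod L)) = (if i = i0 then 1 else 0)"
    if i: "i < L" for i
  proof -
    have "0 < L" using i by simp
    then have lt: "Suc i mod L < L" "Suc i0 mod L < L" by simp_all
    have "(vs ! i0, vs ! (Suc i0 mod L)) = (vs ! i, vs ! (Suc i mod L)) \<longleftrightarrow> i = i0"
      using vs(1) i i0 by (auto simp: L_def nth_eq_iff_index_eq)
    moreover have "(vs ! i0, vs ! (Suc i0 mod L)) \<noteq> (vs ! (Suc i mod L), vs ! i)"
    proof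
      assume "(vs ! i0, vs ! (Suc i0 mod L)) = (vs ! (Suc i mod L), vs ! i)"
      then have "Suc i mod L = i0" "i = Suc i0 mod L"
        using vs(1) lt i i0 by (auto simp: L_def nth_eq_iff_index_eq)
      then show False using Suc_Suc_mod_neq[of i0 L] i0 vs(2) by (simp add: L_def)
    qed
    ultimately show ?thesis by (auto simp: unit_flow_def)
  qed
  then show ?thesis using i0 by (simp add: cycle_flow_def L_def[symmetric])
qed

context plane_graph
begin

definition is_flow :: "(nat \<times> nat \<Rightarrow> real) \<Rightarrow> bool" where
  "is_flow \<phi> \<longleftrightarrow> (\<forall>d. d \<notin> D \<longrightarrow> \<phi> d = 0) \<and> (\<forall>d. \<phi> (prod.swap d) = - \<phi> d)"

definition divergence :: "(nat \<times> nat \<Rightarrow> real) \<Rightarrow> nat \<Rightarrow> real" where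
  "divergence \<phi> v = (\<Sum>u\<in>nbrs adj v. \<phi> (v, u))"

definition grad :: "(nat \<Rightarrow> real) \<Rightarrow> nat \<times> nat \<Rightarrow> real" where
  "grad b d = (if d \<in> D then b (fst d) - b (snd d) else 0)"

definition dual_grad :: "((nat \<times> nat) set \<Rightarrow> real) \<Rightarrow> nat \<times> nat \<Rightarrow> real" where
  "dual_grad L d = (if d \<in> D then L (face d) - L (face (prod.swap d)) else 0)"

definition face_potential :: "(nat \<Rightarrow> real) \<Rightarrow> (nat \<times> nat) set \<Rightarrow> real" where
  "face_potential a g = (\<Sum>k\<in>{1..c}. if g = F k then a k else 0)"

lemma is_flowI: "(\<And>d. d \<notin> D \<Longrightarrow> \<phi> d = 0) \<Longrightarrow> (\<And>d. \<phi> (prod.swap d) = - \<phi> d) \<Longrightarrow> is_flow \<phi>"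
  unfolding is_flow_def by blast

lemma is_flow_outside: "is_flow \<phi> \<Longrightarrow> d \<notin> D \<Longrightarrow> \<phi> d = 0"
  unfolding is_flow_def by blast

lemma is_flow_swap: "is_flow \<phi> \<Longrightarrow> \<phi> (prod.swap d) = - \<phi> d"
  unfolding is_flow_def by blast

lemma is_flow_add: "is_flow \<phi> \<Longrightarrow> is_flow \<psi> \<Longrightarrow> is_flow (\<lambda>d. \<phi> d + \<psi> d)"
  by (rule is_flowI) (simp_all add: is_flow_outside is_flow_swap)

lemma is_flow_sum:
  "finite I \<Longrightarrow> (\<And>i. i \<in> I \<Longrightarrow> is_flow (u i)) \<Longrightarrow> is_flow (\<lambda>d. \<Sum>i\<in>I. a i * u i d)"
  by (rule is_flowI) (simp_all add: is_flow_outside is_flow_swap sum_negf)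

lemma unit_flow_outside: "d0 \<in> D \<Longrightarrow> d \<notin> D \<Longrightarrow> unit_flow d0 d = 0"
  by (auto simp: unit_flow_def)

lemma is_flow_unit_flow: "d0 \<in> D \<Longrightarrow> is_flow (unit_flow d0)"
  by (rule is_flowI) (simp_all add: unit_flow_outside unit_flow_swap)

lemma is_flow_grad: "is_flow (grad b)"
  by (rule is_flowI) (auto simp: grad_def)

lemma is_flow_dual_grad: "is_flow (dual_grad L)"
  by (rule is_flowI) (auto simp: dual_grad_def)

lemma divergence_sum:
  "finite I \<Longrightarrow> divergence (\<lambda>d. \<Sum>i\<in>I. a i * u i d) v = (\<Sum>i\<in>I. a i * divergence (u i) v)"
  unfolding divergence_def by (simp add: sum_distrib_left sum.swap[of _ I])

lemma divergence_unit_flow: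
  assumes "(p, r) \<in> D"
  shows "divergence (unit_flow (p, r)) v = (if v = p then 1 else 0) - (if v = r then 1 else 0)"
proof -
  have "divergence (unit_flow (p, r)) v = (\<Sum>u\<in>nbrs adj v. (if (v, u) = (p, r) then 1 else 0)) -
      (\<Sum>u\<in>nbrs adj v. (if (v, u) = (r, p) then 1 else 0))"
    unfolding divergence_def unit_flow_def by (simp add: sum_subtractf)
  also have "(\<Sum>u\<in>nbrs adj v. (if (v, u) = (p, r) then 1 else (0::real))) = (if v = p then 1 else 0)"
    using assms finite_nbrs by (cases "v = p") (simp_all add: sum.delta' in_darts_iff in_nbrs_iff)
  also have "(\<Sum>u\<in>nbrs adj v. (if (v, u) = (r, p) then 1 else (0::real))) = (if v = r then 1 else 0)"
    using assms adj_sym finite_nbrs by (cases "v = r") (simp_all add: sum.delta' in_darts_iff in_nbrs_iff)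
  finally show ?thesis .
qed

text \<open>The darts leaving a vertex, in rotation order, bound consecutive corners of faces, so
  the terms of a dual gradient around a vertex telescope.\<close>

lemma divergence_dual_grad: "divergence (dual_grad L) v = 0"
proof -
  have "dual_grad L (v, u) = L (face (v, u)) - L (face (v, rot v u))" if "u \<in> nbrs adj v" for u
  proof -
    have "(v, u) \<in> D" "(u, v) \<in> D" using that adj_sym by (simp_all add: in_darts_iff in_nbrs_iff)
    moreover have "face (v, rot v u) = face (u, v)" using face_face_perm[of "(u, v)"] calculation by simp
    ultimately show ?thesis by (simp add: dual_grad_def)
  qed
  then have "divergence (dual_grad L) v
      = (\<Sum>u\<in>nbrs adj v. L (face (v, u))) - (\<Sum>u\<in>nbrs adj v. L (face (v, rot v u)))"
    unfolding divergence_def by (simp add: sum_subtractf)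
  also have "(\<Sum>u\<in>nbrs adj v. L (face (v, rot v u))) = (\<Sum>u\<in>nbrs adj v. L (face (v, u)))"
    using sum.reindex_bij_betw[OF rot_bij[of v], of "\<lambda>u. L (face (v, u))"] by simp
  finally show ?thesis by simp
qed

lemma face_potential_F: assumes k: "k \<in> {1..c}" shows "face_potential a (F k) = a k"
proof -
  have "face_potential a (F k) = (\<Sum>j\<in>{k}. if F k = F j then a j else 0)"
    unfolding face_potential_def using k F_eq_iff[OF k] by (intro sum.mono_neutral_right) auto
  then show ?thesis by simp
qed

lemma face_potential_Fout: "face_potential a Fout = 0"
  unfolding face_potential_def by (rule sum.neutral) (metis F_neq_Fout)

lemma face_potential_cong: "(\<And>k. k \<in> {1..c} \<Longrightarrow> a k = a' k) \<Longrightarrow> face_potential a = face_potential a'"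
  unfolding face_potential_def by (intro ext sum.cong) auto

lemma dual_grad_face_potential_eq_sum:
  "dual_grad (face_potential a) d
     = (\<Sum>k\<in>{1..c}. a k * dual_grad (face_potential (\<lambda>j. if j = k then 1 else 0)) d)"
proof (cases "d \<in> D")
  case True
  have unit: "face_potential (\<lambda>j. if j = k then 1 else 0) g = (if g = F k then 1 else 0)"
    if "k \<in> {1..c}" for k g
  proof -
    have "face_potential (\<lambda>j. if j = k then 1 else 0) g
        = (\<Sum>j\<in>{1..c}. if j = k then (if g = F k then 1 else 0) else 0)"
      unfolding face_potential_def by (intro sum.cong) auto
    with that show ?thesis by (simp add: sum.delta)
  qed
  have "(\<Sum>k\<in>{1..c}. a k * dual_grad (face_potential (\<lambda>j. if j = k then 1 else 0)) d)
      = (\<Sum>k\<in>{1..c}. (if face d = F k then a k else 0) - (if face (prod.swap d) = F k then a k else 0))"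
    using True by (intro sum.cong) (auto simp: dual_grad_def unit)
  also have "\<dots> = dual_grad (face_potential a) d"
    using True by (simp add: sum_subtractf dual_grad_def face_potential_def)
  finally show ?thesis by simp
qed (simp add: dual_grad_def)

lemma grad_eq_sum: "finite V \<Longrightarrow> grad (\<lambda>w. \<Sum>v\<in>V. a v * (if w = v then 1 else 0)) d
    = (\<Sum>v\<in>V. a v * grad (\<lambda>w. if w = v then 1 else 0) d)"
  by (simp add: grad_def right_diff_distrib sum_subtractf)

lemma dual_grad_eq_zero_imp:
  assumes "\<And>d. d \<in> D \<Longrightarrow> dual_grad L d = 0" and "L Fout = 0" and "d \<in> D"
  shows "L (face d) = 0"
proof (rule face_induct[where P = "\<lambda>g. L g = 0", OF assms(2) _ assms(3)])
  fix e assume "e \<in> D" "L (face e) = 0"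
  with assms(1)[of e] show "L (face (prod.swap e)) = 0" by (simp add: dual_grad_def)
qed

lemma dual_grad_face_potential_eq_zero_imp:
  assumes "\<And>d. d \<in> D \<Longrightarrow> dual_grad (face_potential a) d = 0" and k: "k \<in> {1..c}"
  shows "a k = 0"
proof -
  obtain d where "d \<in> D" "F k = face d" using F_eq_face[OF k] by blast
  with assms(1) face_potential_Fout dual_grad_eq_zero_imp face_potential_F[OF k] show ?thesis
    by metis
qed

lemma sum_darts_swap: "(\<Sum>d\<in>D. g (prod.swap d)) = (\<Sum>d\<in>D. g d)"
  by (rule sum.reindex_bij_witness[of _ prod.swap prod.swap]) auto

lemma sum_darts_face_potential:
  "(\<Sum>d\<in>D. X d * face_potential a (face d)) = (\<Sum>k\<in>{1..c}. a k * (\<Sum>d\<in>F k. X d))"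
proof -
  have "(\<Sum>d\<in>D. X d * face_potential a (face d))
      = (\<Sum>k\<in>{1..c}. \<Sum>d\<in>D. if face d = F k then a k * X d else 0)"
    unfolding face_potential_def sum_distrib_left
    by (subst sum.swap) (auto intro!: sum.cong)
  also have "\<dots> = (\<Sum>k\<in>{1..c}. a k * (\<Sum>d\<in>F k. X d))"
  proof (rule sum.cong[OF refl])
    fix k assume k: "k \<in> {1..c}"
    have "{d \<in> D. face d = F k} = F k" using mem_F_iff[OF k] by blast
    then show "(\<Sum>d\<in>D. if face d = F k then a k * X d else 0) = a k * (\<Sum>d\<in>F k. X d)"
      using finite_darts by (simp add: sum.inter_filter[symmetric] sum_distrib_left)
  qed
  finally show ?thesis .
qed

lemma inner_flow_dual_grad:
  assumes "is_flow X"
  shows "(\<Sum>d\<in>D. X d * dual_grad (face_potential a) d) = 2 * (\<Sum>k\<in>{1..c}. a k * (\<Sum>d\<in>F k. X d))"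
proof -
  have "(\<Sum>d\<in>D. X d * dual_grad (face_potential a) d)
      = (\<Sum>d\<in>D. X d * face_potential a (face d)) - (\<Sum>d\<in>D. X d * face_potential a (face (prod.swap d)))"
    by (simp add: sum_subtractf[symmetric] dual_grad_def right_diff_distrib)
  also have "(\<Sum>d\<in>D. X d * face_potential a (face (prod.swap d)))
      = - (\<Sum>d\<in>D. X d * face_potential a (face d))"
    using sum_darts_swap[of "\<lambda>d. X (prod.swap d) * face_potential a (face d)"]
    by (simp add: is_flow_swap[OF assms] sum_negf)
  finally show ?thesis using sum_darts_face_potential by simp
qed

lemma inner_flow_grad:
  assumes "is_flow \<phi>"
  shows "(\<Sum>d\<in>D. \<phi> d * grad b d) = 2 * (\<Sum>v\<in>{1..n}. b v * divergence \<phi> v)"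
proof -
  have "(\<Sum>d\<in>D. \<phi> d * grad b d) = (\<Sum>d\<in>D. \<phi> d * b (fst d)) - (\<Sum>d\<in>D. \<phi> d * b (snd d))"
    by (simp add: grad_def right_diff_distrib sum_subtractf)
  also have "(\<Sum>d\<in>D. \<phi> d * b (snd d)) = - (\<Sum>d\<in>D. \<phi> d * b (fst d))"
    using sum_darts_swap[of "\<lambda>d. \<phi> d * b (snd d)"] by (simp add: is_flow_swap[OF assms] sum_negf)
  also have "(\<Sum>d\<in>D. \<phi> d * b (fst d)) = (\<Sum>v\<in>{1..n}. \<Sum>u\<in>nbrs adj v. \<phi> (v, u) * b v)"
    unfolding darts_Sigma by (simp add: sum.Sigma finite_nbrs split_def)
  also have "\<dots> = (\<Sum>v\<in>{1..n}. b v * divergence \<phi> v)"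
    unfolding divergence_def by (simp add: sum_distrib_left mult.commute)
  finally show ?thesis by simp
qed

lemma face_sum_grad: assumes k: "k \<in> {1..c}" shows "(\<Sum>d\<in>F k. grad b d) = 0"
proof -
  obtain d0 where d0: "d0 \<in> D" "F k = face d0" using F_eq_face[OF k] by blast
  have "(\<Sum>d\<in>F k. grad b d) = (\<Sum>d\<in>F k. b (fst d) - b (snd d))"
    using mem_F_iff[OF k] by (intro sum.cong) (auto simp: grad_def)
  then show ?thesis using face_sum_snd_eq_sum_fst[OF d0(1), of b] d0(2) by (simp add: sum_subtractf)
qed

lemma const_of_grad_eq_zero:
  assumes "\<And>d. d \<in> D \<Longrightarrow> grad b d = 0" and "v \<in> {1..n}"
  shows "b v = b 1"
  using connected_induct[where P = "\<lambda>v. b v = b 1", OF refl _ assms(2)] assms(1)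
  by (fastforce simp: grad_def in_darts_iff)

lemma eq_zero_of_sum_squares:
  assumes "(\<Sum>d\<in>D. Y d * Y d) = 0" and "d \<in> D"
  shows "Y d = (0::real)"
  using assms finite_darts by (subst (asm) sum_nonneg_eq_0_iff) auto

lemma dual_grad_add_grad_eq_zero_imp:
  assumes rel: "\<And>d. d \<in> D \<Longrightarrow> dual_grad (face_potential a) d + grad b d = 0"
  shows "(\<forall>k\<in>{1..c}. a k = 0) \<and> (\<forall>v\<in>{1..n}. b v = b 1)"
proof -
  let ?Y = "dual_grad (face_potential a)"
  have "?Y d = - grad b d" if "d \<in> D" for d using rel[OF that] by linarith
  then have "(\<Sum>d\<in>D. ?Y d * ?Y d) = - (\<Sum>d\<in>D. grad b d * ?Y d)"
    by (simp add: sum_negf[symmetric])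
  also have "\<dots> = 0"
    using inner_flow_dual_grad[OF is_flow_grad] face_sum_grad by simp
  finally have Y: "?Y d = 0" if "d \<in> D" for d using that by (rule eq_zero_of_sum_squares)
  then have "\<forall>k\<in>{1..c}. a k = 0" using dual_grad_face_potential_eq_zero_imp by blast
  moreover have "grad b d = 0" if "d \<in> D" for d using rel[OF that] Y[OF that] by simp
  then have "\<forall>v\<in>{1..n}. b v = b 1" using const_of_grad_eq_zero by blast
  ultimately show ?thesis ..
qed

definition positive_darts :: "(nat \<times> nat) set" where
  "positive_darts = {d \<in> D. fst d < snd d}"

lemma finite_positive_darts: "finite positive_darts"
  using finite_darts by (simp add: positive_darts_def)

lemma card_positive_darts: "card positive_darts = card (edges adj)"
proof -
  have "inj_on (\<lambda>d. {fst d, snd d}) positive_darts"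
    by (rule inj_onI) (auto simp: positive_darts_def doubleton_eq_iff)
  moreover have "(\<lambda>d. {fst d, snd d}) ` positive_darts = edges adj"
  proof
    show "(\<lambda>d. {fst d, snd d}) ` positive_darts \<subseteq> edges adj"
      using edges_eq_image_darts positive_darts_def by auto
    show "edges adj \<subseteq> (\<lambda>d. {fst d, snd d}) ` positive_darts"
    proof
      fix e assume "e \<in> edges adj"
      then obtain d where d: "d \<in> D" "e = {fst d, snd d}" using edges_eq_image_darts by auto
      have "fst d \<noteq> snd d" using swap_dart_neq[OF d(1)] by (cases d) auto
      then have "d \<in> positive_darts \<or> prod.swap d \<in> positive_darts"
        using d(1) by (auto simp: positive_darts_def)
      moreover have "e = {fst (prod.swap d), snd (prod.swap d)}" using d by auto
      ultimately show "e \<in> (\<lambda>d. {fst d, snd d}) ` positive_darts" using d by blast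
    qed
  qed
  ultimately show ?thesis by (metis card_image)
qed

lemma unit_flow_positive_dart:
  assumes "d \<in> positive_darts" "x \<in> positive_darts"
  shows "unit_flow d x = (if x = d then 1 else 0)"
proof -
  have "x \<noteq> prod.swap d" using assms by (auto simp: positive_darts_def)
  then show ?thesis by (simp add: unit_flow_def)
qed

lemma flow_in_span: assumes flow: "is_flow \<phi>" shows "\<phi> \<in> fun_vs.span (unit_flow ` positive_darts)"
proof -
  have sum_delta: "(\<Sum>d\<in>positive_darts. \<phi> d * unit_flow d y) = \<phi> y" if "y \<in> positive_darts" for y
    using that finite_positive_darts by (simp add: unit_flow_positive_dart if_distrib cong: if_cong)
  have expansion: "\<phi> x = (\<Sum>d\<in>positive_darts. \<phi> d * unit_flow d x)" for x
  proof -
    have "x \<notin> D \<or> x \<in> positive_darts \<or> prod.swap x \<in> positive_darts"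
    proof (cases "x \<in> D")
      case True
      then have "fst x \<noteq> snd x" using swap_dart_neq[OF True] by (cases x) auto
      with True show ?thesis by (auto simp: positive_darts_def)
    qed simp
    then consider "x \<notin> D" | "x \<in> positive_darts" | "prod.swap x \<in> positive_darts"
      by blast
    then show ?thesis
    proof cases
      case 1
      then have "unit_flow d x = 0" if "d \<in> positive_darts" for d
        using that unit_flow_outside by (simp add: positive_darts_def)
      with 1 show ?thesis by (simp add: is_flow_outside[OF flow])
    next
      case 2
      then show ?thesis using sum_delta by simp
    next
      case 3
      then have "(\<Sum>d\<in>positive_darts. \<phi> d * unit_flow d x) = - \<phi> (prod.swap x)"
        using sum_delta[OF 3] by (simp add: unit_flow_swap sum_negf)
      then show ?thesis using is_flow_swap[OF flow, of x] by simp
    qed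
  qed
  have "\<phi> = (\<Sum>d\<in>positive_darts. (\<lambda>x. \<phi> d * unit_flow d x))"
  proof
    fix x show "\<phi> x = (\<Sum>d\<in>positive_darts. (\<lambda>x. \<phi> d * unit_flow d x)) x"
      by (subst sum_fun_apply[OF finite_positive_darts]) (rule expansion)
  qed
  also have "\<dots> \<in> fun_vs.span (unit_flow ` positive_darts)"
    by (intro fun_vs.span_sum fun_vs.span_scale fun_vs.span_base) simp
  finally show ?thesis .
qed

text \<open>The \<open>c + (n - 1) + 1 = m + 1\<close> flows \<open>\<phi>\<close>, the dual gradients of the \<open>c\<close> unit face
  potentials and the gradients of the indicators of the vertices \<open>2, \<dots>, n\<close> live in a space of
  dimension at most \<open>m\<close> (Euler's formula \<open>c = m - n + 1\<close>), so they satisfy a nontrivial linear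
  relation.\<close>

lemma flow_dual_grad_grad_relation:
  assumes "is_flow \<phi>"
  obtains t a b where "t \<noteq> 0 \<or> (\<exists>k\<in>{1..c}. a k \<noteq> 0) \<or> (\<exists>v\<in>{1..n}. b v \<noteq> b 1)"
    and "\<And>d. t * \<phi> d + dual_grad (face_potential a) d + grad b d = 0"
proof -
  define I where "I = {0..c} <+> {2..n}"
  define u where "u i = (case i of
      Inl k \<Rightarrow> if k = 0 then \<phi> else dual_grad (face_potential (\<lambda>j. if j = k then 1 else 0))
    | Inr v \<Rightarrow> grad (\<lambda>w. if w = v then 1 else 0))" for i
  have sum_I: "(\<Sum>i\<in>I. f i) = f (Inl 0) + (\<Sum>k\<in>{1..c}. f (Inl k)) + (\<Sum>v\<in>{2..n}. f (Inr v))" for f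
  proof -
    have "{0..c} = insert 0 {1..c}" by auto
    then show ?thesis unfolding I_def by (simp add: sum.Plus)
  qed
  have "card I = c + n" unfolding I_def using n_ge_1 by (simp add: card_Plus)
  also have "\<dots> = card (edges adj) + 1" using embedding unfolding plane_embedding_def by linarith
  finally have "card (unit_flow ` positive_darts) < card I"
    using card_image_le[OF finite_positive_darts, of unit_flow] card_positive_darts by simp
  moreover have "u i \<in> fun_vs.span (unit_flow ` positive_darts)" for i
    by (rule flow_in_span) (auto simp: u_def assms is_flow_grad is_flow_dual_grad split: sum.split)
  ultimately obtain \<alpha> where rel: "\<And>x. (\<Sum>i\<in>I. \<alpha> i * u i x) = 0" and nz: "\<exists>i\<in>I. \<alpha> i \<noteq> 0"
    using linear_dependence_of_card_gt[of I "unit_flow ` positive_darts" u] finite_positive_darts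
    by (auto simp: I_def)
  define b where "b w = (\<Sum>v\<in>{2..n}. \<alpha> (Inr v) * (if w = v then 1 else 0))" for w
  have b: "b v = (if v \<in> {2..n} then \<alpha> (Inr v) else 0)" for v
    unfolding b_def by (simp add: if_distrib[of "\<lambda>x. _ * x"] sum.delta' cong: if_cong)
  show ?thesis
  proof (rule that[of "\<alpha> (Inl 0)" "\<lambda>k. \<alpha> (Inl k)" b])
    obtain i where i: "i \<in> I" "\<alpha> i \<noteq> 0" using nz by blast
    show "\<alpha> (Inl 0) \<noteq> 0 \<or> (\<exists>k\<in>{1..c}. \<alpha> (Inl k) \<noteq> 0) \<or> (\<exists>v\<in>{1..n}. b v \<noteq> b 1)"
    proof (cases i)
      case (Inl k)
      with i show ?thesis by (cases "k = 0") (auto simp: I_def)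
    next
      case (Inr v)
      with i have "v \<in> {1..n}" "b v \<noteq> b 1" by (auto simp: I_def b)
      then show ?thesis by blast
    qed
    fix d
    have "0 = (\<Sum>i\<in>I. \<alpha> i * u i d)" using rel by simp
    also have "\<dots> = \<alpha> (Inl 0) * \<phi> d
        + (\<Sum>k\<in>{1..c}. \<alpha> (Inl k) * dual_grad (face_potential (\<lambda>j. if j = k then 1 else 0)) d)
        + (\<Sum>v\<in>{2..n}. \<alpha> (Inr v) * grad (\<lambda>w. if w = v then 1 else 0) d)"
      unfolding sum_I by (simp add: u_def)
    also have "\<dots> = \<alpha> (Inl 0) * \<phi> d + dual_grad (face_potential (\<lambda>k. \<alpha> (Inl k))) d + grad b d"
      unfolding b_def
      by (simp add: grad_eq_sum dual_grad_face_potential_eq_sum[of "\<lambda>k. \<alpha> (Inl k)"])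
    finally show "\<alpha> (Inl 0) * \<phi> d + dual_grad (face_potential (\<lambda>k. \<alpha> (Inl k))) d + grad b d = 0"
      by simp
  qed
qed

lemma face_potential_scale: "face_potential (\<lambda>k. r * a k) g = r * face_potential a g"
  unfolding face_potential_def sum_distrib_left by (intro sum.cong) auto

lemma dual_grad_face_potential_scale:
  "dual_grad (face_potential (\<lambda>k. r * a k)) d = r * dual_grad (face_potential a) d"
  by (simp add: dual_grad_def face_potential_scale right_diff_distrib)

lemma grad_scale: "grad (\<lambda>w. r * b w) d = r * grad b d"
  by (simp add: grad_def right_diff_distrib)

lemma flow_decomposition:
  assumes "is_flow \<phi>"
  obtains a b where "\<And>d. \<phi> d = dual_grad (face_potential a) d + grad b d"
proof -
  obtain t a b where nz: "t \<noteq> 0 \<or> (\<exists>k\<in>{1..c}. a k \<noteq> 0) \<or> (\<exists>v\<in>{1..n}. b v \<noteq> b 1)"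
    and rel: "\<And>d. t * \<phi> d + dual_grad (face_potential a) d + grad b d = 0"
    using flow_dual_grad_grad_relation[OF assms] by blast
  have "t \<noteq> 0"
  proof
    assume "t = 0"
    then have "dual_grad (face_potential a) d + grad b d = 0" if "d \<in> D" for d
      using rel[of d] by simp
    then have "(\<forall>k\<in>{1..c}. a k = 0) \<and> (\<forall>v\<in>{1..n}. b v = b 1)"
      by (rule dual_grad_add_grad_eq_zero_imp)
    with nz \<open>t = 0\<close> show False by blast
  qed
  have "\<phi> d = dual_grad (face_potential (\<lambda>k. - 1 / t * a k)) d + grad (\<lambda>w. - 1 / t * b w) d" for d
  proof -
    have "t * \<phi> d = - (dual_grad (face_potential a) d + grad b d)" using rel[of d] by linarith
    then have "\<phi> d = - 1 / t * (dual_grad (face_potential a) d + grad b d)"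
      using \<open>t \<noteq> 0\<close> by (simp add: field_simps)
    then show ?thesis by (simp only: dual_grad_face_potential_scale grad_scale distrib_left)
  qed
  then show ?thesis by (rule that)
qed

lemma divergence_free_flow_eq_dual_grad:
  assumes flow: "is_flow z" and div: "\<And>v. divergence z v = 0"
  obtains a where "\<And>d. z d = dual_grad (face_potential a) d"
proof -
  obtain a b where z: "\<And>d. z d = dual_grad (face_potential a) d + grad b d"
    using flow_decomposition[OF flow] by blast
  have "(\<Sum>d\<in>D. grad b d * grad b d)
      = (\<Sum>d\<in>D. z d * grad b d - grad b d * dual_grad (face_potential a) d)"
    by (intro sum.cong) (simp_all add: z algebra_simps)
  also have "\<dots> = (\<Sum>d\<in>D. z d * grad b d) - (\<Sum>d\<in>D. grad b d * dual_grad (face_potential a) d)"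
    by (rule sum_subtractf)
  also have "\<dots> = 0"
    using inner_flow_grad[OF flow] inner_flow_dual_grad[OF is_flow_grad] div face_sum_grad by simp
  finally have "grad b d = 0" if "d \<in> D" for d using that by (rule eq_zero_of_sum_squares)
  then have "z d = dual_grad (face_potential a) d" for d
    using z[of d] by (cases "d \<in> D") (simp_all add: grad_def)
  then show ?thesis by (rule that)
qed

lemma zero_circulation_flow_eq_grad:
  assumes flow: "is_flow \<omega>" and circ: "\<And>k. k \<in> {1..c} \<Longrightarrow> (\<Sum>d\<in>F k. \<omega> d) = 0"
  obtains \<theta> where "\<And>d. d \<in> D \<Longrightarrow> \<omega> d = \<theta> (fst d) - \<theta> (snd d)"
proof -
  obtain a b where \<omega>: "\<And>d. \<omega> d = dual_grad (face_potential a) d + grad b d"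
    using flow_decomposition[OF flow] by blast
  let ?Y = "dual_grad (face_potential a)"
  have "(\<Sum>d\<in>D. ?Y d * ?Y d) = (\<Sum>d\<in>D. \<omega> d * ?Y d - grad b d * ?Y d)"
    by (intro sum.cong) (simp_all add: \<omega> algebra_simps)
  also have "\<dots> = (\<Sum>d\<in>D. \<omega> d * ?Y d) - (\<Sum>d\<in>D. grad b d * ?Y d)"
    by (rule sum_subtractf)
  also have "\<dots> = 0"
    using inner_flow_dual_grad[OF flow] inner_flow_dual_grad[OF is_flow_grad] circ face_sum_grad
    by simp
  finally have "?Y d = 0" if "d \<in> D" for d using that by (rule eq_zero_of_sum_squares)
  then have "\<omega> d = b (fst d) - b (snd d)" if "d \<in> D" for d
    using \<omega>[of d] that by (simp add: grad_def)
  then show ?thesis by (rule that)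
qed

lemma is_flow_cycle_flow:
  assumes "\<forall>i<length vs. adj (vs ! i) (vs ! (Suc i mod length vs))"
  shows "is_flow (cycle_flow vs)"
  using assms unit_flow_outside
  by (intro is_flowI) (simp_all add: cycle_flow_def unit_flow_swap sum_negf in_darts_iff)

lemma divergence_cycle_flow:
  assumes vs: "\<forall>i<length vs. adj (vs ! i) (vs ! (Suc i mod length vs))" and L: "3 \<le> length vs"
  shows "divergence (cycle_flow vs) v = 0"
proof -
  let ?L = "length vs" and ?e = "\<lambda>i. (vs ! i, vs ! (Suc i mod length vs))"
  have "divergence (cycle_flow vs) v = (\<Sum>i<?L. 1 * divergence (unit_flow (?e i)) v)"
    using divergence_sum[of "{..<?L}" "\<lambda>_. 1" "\<lambda>i. unit_flow (?e i)" v]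
    by (simp add: cycle_flow_def[abs_def])
  also have "\<dots> = (\<Sum>i<?L. (if v = vs ! i then 1 else 0)) - (\<Sum>i<?L. (if v = vs ! (Suc i mod ?L) then 1 else 0))"
    using vs by (simp add: divergence_unit_flow in_darts_iff sum_subtractf)
  also have "(\<Sum>i<?L. (if v = vs ! (Suc i mod ?L) then 1 else 0)) = (\<Sum>i<?L. (if v = vs ! i then 1 else (0::real)))"
    using sum.reindex_bij_betw[OF bij_betw_Suc_mod, of ?L "\<lambda>i. if v = vs ! i then 1 else (0::real)"] L
    by (cases vs) simp_all
  finally show ?thesis by simp
qed

text \<open>Since every edge lies on a cycle, the cycle's flow is divergence free and hence a dual
  gradient; its value \<open>1\<close> on the edge is the difference of the potentials of the two faces
  beside it, so these faces differ.\<close>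

lemma face_swap_neq:
  assumes d: "d \<in> D"
  shows "face (prod.swap d) \<noteq> face d"
proof -
  obtain vs i0 where vs: "3 \<le> length vs" "distinct vs"
      "\<forall>i<length vs. adj (vs ! i) (vs ! (Suc i mod length vs))"
    and i0: "i0 < length vs" "d = (vs ! i0, vs ! (Suc i0 mod length vs))"
    using every_edge_on_cycle d
    unfolding every_edge_on_cycle_def edge_on_cycle_def in_darts_iff by (cases d) fastforce
  obtain a where a: "\<And>d. cycle_flow vs d = dual_grad (face_potential a) d"
    using divergence_free_flow_eq_dual_grad[OF is_flow_cycle_flow divergence_cycle_flow] vs by metis
  have "dual_grad (face_potential a) d = 1" using cycle_flow_edge[OF vs(2,1) i0(1)] a i0(2) by simp
  with d show ?thesis by (auto simp: dual_grad_def)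
qed

lemma face_swap_cases:
  assumes d: "d \<in> D"
  obtains (out_in) k where "k \<in> {1..c}" "face d = Fout" "face (prod.swap d) = F k"
    | (in_out) k where "k \<in> {1..c}" "face d = F k" "face (prod.swap d) = Fout"
    | (in_in) k l where "k \<in> {1..c}" "l \<in> {1..c}" "k \<noteq> l" "face d = F k" "face (prod.swap d) = F l"
proof -
  have ne: "face (prod.swap d) \<noteq> face d" by (rule face_swap_neq[OF d])
  have swap_cases: "face (prod.swap d) = Fout \<or> (\<exists>l\<in>{1..c}. face (prod.swap d) = F l)"
    using face_cases[of "prod.swap d"] d by simp
  from face_cases[OF d] show thesis
  proof (elim disjE bexE)
    assume "face d = Fout"
    with swap_cases ne show thesis using out_in by blast
  next
    fix k assume k: "k \<in> {1..c}" "face d = F k"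
    from swap_cases show thesis
    proof (elim disjE bexE)
      assume "face (prod.swap d) = Fout"
      with k show thesis by (rule in_out)
    next
      fix l assume "l \<in> {1..c}" "face (prod.swap d) = F l"
      with k ne show thesis using in_in by metis
    qed
  qed
qed

end

lemma borders_doubleton_iff: "borders {a, b} X \<longleftrightarrow> (a, b) \<in> X \<or> (b, a) \<in> X"
  unfolding borders_def by (auto simp: doubleton_eq_iff)

context plane_graph
begin

lemma card_darts_to_face:
  assumes k: "k \<in> {1..c}" and g: "g \<in> faces adj rot" and gk: "g \<noteq> F k"
  shows "card {d \<in> F k. face (prod.swap d) = g} = card {e \<in> edges adj. borders e (F k) \<and> borders e g}"
proof (rule bij_betw_same_card[of "\<lambda>d. {fst d, snd d}"])
  let ?A = "{d \<in> F k. face (prod.swap d) = g}"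
  let ?B = "{e \<in> edges adj. borders e (F k) \<and> borders e g}"
  have "inj_on (\<lambda>d. {fst d, snd d}) ?A"
  proof (rule inj_onI, rule ccontr)
    fix d d' assume d: "d \<in> ?A" and d': "d' \<in> ?A" and e: "{fst d, snd d} = {fst d', snd d'}"
      and "d \<noteq> d'"
    then have "d' = prod.swap d" by (cases d, cases d') (auto simp: doubleton_eq_iff)
    then have "face (prod.swap d') = F k" using d mem_F_iff[OF k] by simp
    then show False using d' gk by simp
  qed
  moreover have "(\<lambda>d. {fst d, snd d}) ` ?A = ?B"
  proof
    show "(\<lambda>d. {fst d, snd d}) ` ?A \<subseteq> ?B"
    proof
      fix e assume "e \<in> (\<lambda>d. {fst d, snd d}) ` ?A"
      then obtain d where d: "d \<in> F k" "face (prod.swap d) = g" "e = {fst d, snd d}" by blast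
      then have "d \<in> D" using mem_F_iff[OF k] by simp
      with d have "prod.swap d \<in> g" using mem_faces_iff[OF g] by simp
      with d \<open>d \<in> D\<close> show "e \<in> ?B"
        using edge_of_dart[OF \<open>d \<in> D\<close>] by (cases d) (auto simp: borders_doubleton_iff)
    qed
    show "?B \<subseteq> (\<lambda>d. {fst d, snd d}) ` ?A"
    proof
      fix e assume e: "e \<in> ?B"
      then obtain a b where ab: "(a, b) \<in> F k" "e = {a, b}" unfolding borders_def by blast
      obtain a' b' where ab': "(a', b') \<in> g" "e = {a', b'}" using e unfolding borders_def by blast
      have "(a, b) \<in> D" "face (a, b) = F k" using ab mem_F_iff[OF k] by auto
      then have "(a, b) \<notin> g" using mem_faces_iff[OF g] gk by auto
      moreover have "(a', b') = (a, b) \<or> (a', b') = (b, a)" using ab ab' by (auto simp: doubleton_eq_iff)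
      ultimately have "face (prod.swap (a, b)) = g" using ab' mem_faces_iff[OF g] by auto
      with ab show "e \<in> (\<lambda>d. {fst d, snd d}) ` ?A" by (intro image_eqI[of _ _ "(a, b)"]) auto
    qed
  qed
  ultimately show "bij_betw (\<lambda>d. {fst d, snd d}) ?A ?B" by (simp add: bij_betw_def)
qed

lemma m_out_eq_card:
  assumes k: "k \<in> {1..c}" shows "m_out adj Fout F k = card {d \<in> F k. face (prod.swap d) = Fout}"
proof -
  have "Fout \<noteq> F k" using F_neq_Fout[OF k] by simp
  then show ?thesis by (simp add: m_out_def card_darts_to_face[OF k Fout_in_faces])
qed

lemma m_pair_eq_card:
  "k \<in> {1..c} \<Longrightarrow> l \<in> {1..c} \<Longrightarrow> k \<noteq> l \<Longrightarrow> m_pair adj F k l = card {d \<in> F k. face (prod.swap d) = F l}"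
  using card_darts_to_face[of k "F l"] faces_eq F_eq_iff by (simp add: m_pair_def)

lemma card_darts_to_face_pos_iff:
  assumes k: "k \<in> {1..c}"
  shows "0 < card {d \<in> F k. face (prod.swap d) = g} \<longleftrightarrow> (\<exists>d\<in>D. face d = F k \<and> face (prod.swap d) = g)"
proof -
  have "finite {d \<in> F k. face (prod.swap d) = g}" using finite_F[OF k] by simp
  then have "0 < card {d \<in> F k. face (prod.swap d) = g} \<longleftrightarrow> {d \<in> F k. face (prod.swap d) = g} \<noteq> {}"
    by (simp add: card_gt_0_iff)
  also have "\<dots> \<longleftrightarrow> (\<exists>d\<in>D. face d = F k \<and> face (prod.swap d) = g)"
    using mem_F_iff[OF k] by blast
  finally show ?thesis .
qed

lemma sum_F_face_swap:
  assumes k: "k \<in> {1..c}"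
  shows "(\<Sum>d\<in>F k. h (face (prod.swap d)))
    = real (m_out adj Fout F k) * h Fout + (\<Sum>l\<in>{1..c} - {k}. real (m_pair adj F k l) * h (F l))"
proof -
  let ?G = "insert Fout (F ` ({1..c} - {k}))"
  let ?n = "\<lambda>g. real (card {d \<in> F k. face (prod.swap d) = g})"
  have "face (prod.swap d) \<in> ?G" if "d \<in> F k" for d
  proof -
    have d: "d \<in> D" "face d = F k" using that mem_F_iff[OF k] by auto
    then show ?thesis using face_cases[of "prod.swap d"] face_swap_neq[OF d(1)] by auto
  qed
  then have image: "(\<lambda>d. face (prod.swap d)) ` F k \<subseteq> ?G" by blast
  have Fout_notin: "Fout \<notin> F ` ({1..c} - {k})"
  proof
    assume "Fout \<in> F ` ({1..c} - {k})"
    then obtain l where "l \<in> {1..c}" "F l = Fout" by blast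
    then show False using F_neq_Fout by blast
  qed
  from sum.group[OF finite_F[OF k] _ image, of "\<lambda>d. h (face (prod.swap d))"]
  have "(\<Sum>d\<in>F k. h (face (prod.swap d))) = (\<Sum>g\<in>?G. ?n g * h g)" by simp
  also have "\<dots> = ?n Fout * h Fout + (\<Sum>g\<in>F ` ({1..c} - {k}). ?n g * h g)"
    using Fout_notin by (intro sum.insert) auto
  also have "(\<Sum>g\<in>F ` ({1..c} - {k}). ?n g * h g) = (\<Sum>l\<in>{1..c} - {k}. ?n (F l) * h (F l))"
    using inj_on_subset[OF inj_on_F] by (intro sum.reindex_cong[of F]) auto
  finally show ?thesis
    using k by (simp add: m_out_eq_card m_pair_eq_card)
qed

lemma face_potential_diff_bounded:
  assumes dom: "\<epsilon> \<in> domain_D adj Fout F c" and d: "d \<in> D"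
  shows "\<bar>face_potential \<epsilon> (face d) - face_potential \<epsilon> (face (prod.swap d))\<bar> \<le> 1"
proof -
  have out: "\<bar>\<epsilon> k\<bar> \<le> 1"
    if k: "k \<in> {1..c}" and e: "e \<in> D" "face e = F k" "face (prod.swap e) = Fout" for k e
  proof -
    have "0 < m_out adj Fout F k"
      using card_darts_to_face_pos_iff[OF k] e by (auto simp: m_out_eq_card[OF k])
    with dom k show ?thesis unfolding domain_D_def by blast
  qed
  have pair: "\<bar>\<epsilon> k - \<epsilon> l\<bar> \<le> 1"
    if k: "k \<in> {1..c}" and l: "l \<in> {1..c}" and kl: "k \<noteq> l"
      and e: "e \<in> D" "face e = F k" "face (prod.swap e) = F l" for k l e
  proof -
    have "0 < m_pair adj F k l"
      using card_darts_to_face_pos_iff[OF k] e by (auto simp: m_pair_eq_card[OF k l kl])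
    with dom k l kl show ?thesis unfolding domain_D_def by blast
  qed
  from d show ?thesis
  proof (cases rule: face_swap_cases)
    case (out_in k)
    then show ?thesis using out[of k "prod.swap d"] d by (simp add: face_potential_F face_potential_Fout)
  next
    case (in_out k)
    then show ?thesis using out[of k d] d by (simp add: face_potential_F face_potential_Fout)
  next
    case (in_in k l)
    then show ?thesis using pair[of k l d] d by (simp add: face_potential_F)
  qed
qed

lemma domain_D_of_face_potential_diff_bounded:
  assumes zero: "\<And>k. k \<notin> {1..c} \<Longrightarrow> \<epsilon> k = 0"
    and bounded: "\<And>d. d \<in> D \<Longrightarrow> \<bar>face_potential \<epsilon> (face d) - face_potential \<epsilon> (face (prod.swap d))\<bar> \<le> 1"
  shows "\<epsilon> \<in> domain_D adj Fout F c"
proof -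
  have "\<bar>\<epsilon> k\<bar> \<le> 1" if k: "k \<in> {1..c}" and m: "0 < m_out adj Fout F k" for k
  proof -
    obtain d where d: "d \<in> D" "face d = F k" "face (prod.swap d) = Fout"
      using m card_darts_to_face_pos_iff[OF k] by (auto simp: m_out_eq_card[OF k])
    then show ?thesis using bounded[OF d(1)] k by (simp add: face_potential_F face_potential_Fout)
  qed
  moreover have "\<bar>\<epsilon> k - \<epsilon> l\<bar> \<le> 1"
    if k: "k \<in> {1..c}" and l: "l \<in> {1..c}" and kl: "k \<noteq> l" and m: "0 < m_pair adj F k l" for k l
  proof -
    obtain d where d: "d \<in> D" "face d = F k" "face (prod.swap d) = F l"
      using m card_darts_to_face_pos_iff[OF k] by (auto simp: m_pair_eq_card[OF k l kl])
    then show ?thesis using bounded[OF d(1)] k l by (simp add: face_potential_F)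
  qed
  ultimately show ?thesis using zero unfolding domain_D_def by blast
qed

end

lemma Delta_swap:
  assumes "- (pi / 2) \<le> Delta \<theta> a b" "Delta \<theta> a b \<le> pi / 2"
  shows "Delta \<theta> b a = - Delta \<theta> a b"
proof -
  have "- pi < wrap (\<theta> a - \<theta> b)" "wrap (\<theta> a - \<theta> b) < pi"
    using assms pi_gt_zero unfolding Delta_def by linarith+
  then have "wrap (- (\<theta> a - \<theta> b)) = - wrap (\<theta> a - \<theta> b)" by (rule wrap_minus)
  then show ?thesis unfolding Delta_def by simp
qed

section \<open>Phase differences prescribed by a face potential\<close>

context plane_graph
begin

text \<open>For a dart \<open>d\<close> of \<open>F k\<close> this is \<open>\<delta>\<^sub>k(e; \<epsilon>)\<close>: the face on the other side of \<open>d\<close> is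
  \<open>face (prod.swap d)\<close>, with potential \<open>\<epsilon> l\<close> for \<open>F l\<close> and \<open>0\<close> for the unbounded face.\<close>

definition angle_flow :: "(nat \<Rightarrow> real) \<Rightarrow> nat \<times> nat \<Rightarrow> real" where
  "angle_flow \<epsilon> d = arcsin (face_potential \<epsilon> (face d) - face_potential \<epsilon> (face (prod.swap d)))"

lemma face_sum_angle_flow:
  assumes k: "k \<in> {1..c}"
  shows "(\<Sum>d\<in>F k. angle_flow \<epsilon> d) = calA adj Fout F c \<epsilon> k"
proof -
  have "(\<Sum>d\<in>F k. angle_flow \<epsilon> d) = (\<Sum>d\<in>F k. arcsin (\<epsilon> k - face_potential \<epsilon> (face (prod.swap d))))"
    using mem_F_iff[OF k] face_potential_F[OF k] by (intro sum.cong) (simp_all add: angle_flow_def)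
  also have "\<dots> = real (m_out adj Fout F k) * arcsin (\<epsilon> k - face_potential \<epsilon> Fout)
      + (\<Sum>l\<in>{1..c} - {k}. real (m_pair adj F k l) * arcsin (\<epsilon> k - face_potential \<epsilon> (F l)))"
    by (rule sum_F_face_swap[OF k])
  also have "\<dots> = calA adj Fout F c \<epsilon> k"
    unfolding calA_def face_potential_Fout by (simp add: face_potential_F)
  finally show ?thesis .
qed

lemma angle_flow_bounds:
  "\<epsilon> \<in> domain_D adj Fout F c \<Longrightarrow> d \<in> D \<Longrightarrow> - (pi / 2) \<le> angle_flow \<epsilon> d \<and> angle_flow \<epsilon> d \<le> pi / 2"
  unfolding angle_flow_def using face_potential_diff_bounded arcsin_bounded by (metis abs_le_iff minus_le_iff)

lemma sin_angle_flow:
  "\<epsilon> \<in> domain_D adj Fout F c \<Longrightarrow> d \<in> D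
    \<Longrightarrow> sin (angle_flow \<epsilon> d) = face_potential \<epsilon> (face d) - face_potential \<epsilon> (face (prod.swap d))"
  unfolding angle_flow_def using face_potential_diff_bounded sin_arcsin by (metis abs_le_iff minus_le_iff)

lemma angle_flow_swap:
  assumes "\<epsilon> \<in> domain_D adj Fout F c" "d \<in> D"
  shows "angle_flow \<epsilon> (prod.swap d) = - angle_flow \<epsilon> d"
proof -
  have "angle_flow \<epsilon> (prod.swap d)
      = arcsin (- (face_potential \<epsilon> (face d) - face_potential \<epsilon> (face (prod.swap d))))"
    by (simp add: angle_flow_def)
  also have "\<dots> = - angle_flow \<epsilon> d"
    unfolding angle_flow_def using face_potential_diff_bounded[OF assms] by (intro arcsin_minus) auto
  finally show ?thesis .
qed

lemma edge_cond_of_angle_flow: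
  assumes Delta: "\<And>d. d \<in> D \<Longrightarrow> Delta \<theta> (fst d) (snd d) = angle_flow \<epsilon> d"
  shows "edge_cond Fout F c \<epsilon> \<theta>"
  unfolding edge_cond_def
proof (intro ballI, clarify)
  fix k a b assume k: "k \<in> {1..c}" and ab: "(a, b) \<in> F k"
  have fab: "(a, b) \<in> D" "face (a, b) = F k" using mem_F_iff[OF k] ab by auto
  have Dab: "Delta \<theta> a b = arcsin (\<epsilon> k - face_potential \<epsilon> (face (b, a)))"
    using Delta[OF fab(1)] fab(2) face_potential_F[OF k] by (simp add: angle_flow_def)
  have "Delta \<theta> a b = arcsin (\<epsilon> k)" if "borders {a, b} Fout"
  proof -
    have "(a, b) \<notin> Fout" using mem_Fout_iff fab(2) F_neq_Fout[OF k] by simp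
    with that have "face (b, a) = Fout" using mem_Fout_iff by (auto simp: borders_doubleton_iff)
    with Dab show ?thesis by (simp add: face_potential_Fout)
  qed
  moreover have "Delta \<theta> a b = arcsin (\<epsilon> k - \<epsilon> l)"
    if l: "l \<in> {1..c}" "l \<noteq> k" "borders {a, b} (F l)" for l
  proof -
    have "(a, b) \<notin> F l" using mem_F_iff[OF l(1)] fab(2) F_eq_iff[OF k l(1)] l(2) by auto
    with l have "face (b, a) = F l" using mem_F_iff[OF l(1)] by (auto simp: borders_doubleton_iff)
    with Dab show ?thesis by (simp add: face_potential_F[OF l(1)])
  qed
  ultimately show "(borders {a, b} Fout \<longrightarrow> Delta \<theta> a b = arcsin (\<epsilon> k)) \<and>
      (\<forall>l\<in>{1..c}. l \<noteq> k \<and> borders {a, b} (F l) \<longrightarrow> Delta \<theta> a b = arcsin (\<epsilon> k - \<epsilon> l))"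
    by blast
qed

lemma angle_flow_of_edge_cond:
  assumes dom: "\<epsilon> \<in> domain_D adj Fout F c" and E: "edge_cond Fout F c \<epsilon> \<theta>" and d: "d \<in> D"
  shows "Delta \<theta> (fst d) (snd d) = angle_flow \<epsilon> d"
proof -
  have out: "Delta \<theta> a b = arcsin (\<epsilon> k)"
    if "k \<in> {1..c}" "(a, b) \<in> F k" "borders {a, b} Fout" for k a b
    using E that unfolding edge_cond_def by fast
  have inner: "Delta \<theta> a b = arcsin (\<epsilon> k - \<epsilon> l)"
    if "k \<in> {1..c}" "(a, b) \<in> F k" "l \<in> {1..c}" "l \<noteq> k" "borders {a, b} (F l)" for k l a b
    using E that unfolding edge_cond_def by fast
  obtain a b where ab: "d = (a, b)" by fastforce
  have ab_D: "(a, b) \<in> D" "(b, a) \<in> D" using d swap_in_darts_iff[of d] ab by auto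
  from d show ?thesis
  proof (cases rule: face_swap_cases)
    case (out_in k)
    have bound: "\<bar>\<epsilon> k\<bar> \<le> 1"
      using face_potential_diff_bounded[OF dom d] out_in by (simp add: face_potential_F face_potential_Fout)
    have "(b, a) \<in> F k" "borders {b, a} Fout"
      using mem_F_iff[OF out_in(1)] mem_Fout_iff ab_D out_in ab by (auto simp: borders_doubleton_iff)
    then have Dba: "Delta \<theta> b a = arcsin (\<epsilon> k)" using out[OF out_in(1)] by blast
    then have "Delta \<theta> a b = - arcsin (\<epsilon> k)" using Delta_swap arcsin_bounded bound by simp
    also have "\<dots> = angle_flow \<epsilon> d" unfolding angle_flow_def using out_in bound
      by (simp add: face_potential_F face_potential_Fout arcsin_minus)
    finally show ?thesis using ab by simp
  next
    case (in_out k)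
    have "(a, b) \<in> F k" "borders {a, b} Fout"
      using mem_F_iff[OF in_out(1)] mem_Fout_iff ab_D in_out ab by (auto simp: borders_doubleton_iff)
    then show ?thesis
      using out[OF in_out(1)] in_out ab by (simp add: angle_flow_def face_potential_F face_potential_Fout)
  next
    case (in_in k l)
    have "(a, b) \<in> F k" "borders {a, b} (F l)"
      using mem_F_iff[OF in_in(1)] mem_F_iff[OF in_in(2)] ab_D in_in ab by (auto simp: borders_doubleton_iff)
    then show ?thesis
      using inner[OF in_in(1) _ in_in(2)] in_in ab by (simp add: angle_flow_def face_potential_F)
  qed
qed

lemma edge_cond_iff:
  "\<epsilon> \<in> domain_D adj Fout F c
    \<Longrightarrow> edge_cond Fout F c \<epsilon> \<theta> \<longleftrightarrow> (\<forall>d\<in>D. Delta \<theta> (fst d) (snd d) = angle_flow \<epsilon> d)"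
  using edge_cond_of_angle_flow angle_flow_of_edge_cond by blast

end

section \<open>Stable fixed points\<close>

context plane_graph
begin

lemma stab_matrix_quadratic_form:
  "(\<Sum>i\<in>{1..n}. \<Sum>j\<in>{1..n}. x i * stab_matrix adj K \<theta> i j * x j)
    = - (\<Sum>d\<in>D. K * cos (\<theta> (fst d) - \<theta> (snd d)) * (x (fst d) - x (snd d))\<^sup>2) / 2"
proof -
  define w where "w i j = K * cos (\<theta> i - \<theta> j)" for i j
  define f where "f d = w (fst d) (snd d) * (x (fst d) * x (snd d) - x (fst d) * x (fst d))" for d
  have row: "(\<Sum>j\<in>{1..n}. x i * stab_matrix adj K \<theta> i j * x j) = (\<Sum>j\<in>nbrs adj i. f (i, j))"
    if i: "i \<in> {1..n}" for i
  proof -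
    have ni: "i \<notin> nbrs adj i" using adj_bounds by (auto simp: in_nbrs_iff)
    have sub: "insert i (nbrs adj i) \<subseteq> {1..n}" using i adj_bounds by (auto simp: in_nbrs_iff)
    have "(\<Sum>j\<in>{1..n}. x i * stab_matrix adj K \<theta> i j * x j)
        = (\<Sum>j\<in>insert i (nbrs adj i). x i * stab_matrix adj K \<theta> i j * x j)"
      using sub by (intro sum.mono_neutral_right) (auto simp: stab_matrix_def in_nbrs_iff)
    also have "\<dots> = x i * stab_matrix adj K \<theta> i i * x i + (\<Sum>j\<in>nbrs adj i. w i j * (x i * x j))"
      using ni finite_nbrs by (simp add: stab_matrix_def in_nbrs_iff w_def mult_ac)
    also have "x i * stab_matrix adj K \<theta> i i * x i = - (\<Sum>j\<in>nbrs adj i. w i j * (x i * x i))"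
      using ni by (simp add: stab_matrix_def in_nbrs_iff w_def sum_distrib_left mult_ac)
    finally show ?thesis by (simp add: f_def right_diff_distrib sum_subtractf)
  qed
  have "(\<Sum>i\<in>{1..n}. \<Sum>j\<in>{1..n}. x i * stab_matrix adj K \<theta> i j * x j) = (\<Sum>i\<in>{1..n}. \<Sum>j\<in>nbrs adj i. f (i, j))"
    using row by simp
  also have "\<dots> = (\<Sum>d\<in>D. f d)"
    unfolding darts_Sigma by (simp add: sum.Sigma finite_nbrs split_def)
  finally have quad: "(\<Sum>i\<in>{1..n}. \<Sum>j\<in>{1..n}. x i * stab_matrix adj K \<theta> i j * x j) = (\<Sum>d\<in>D. f d)" .
  have cos_sym: "cos (\<theta> j - \<theta> i) = cos (\<theta> i - \<theta> j)" for i j by (metis cos_minus minus_diff_eq)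
  have "2 * (\<Sum>d\<in>D. f d) = (\<Sum>d\<in>D. f d + f (prod.swap d))"
    using sum_darts_swap[of f] by (simp add: sum.distrib)
  also have "\<dots> = - (\<Sum>d\<in>D. K * cos (\<theta> (fst d) - \<theta> (snd d)) * (x (fst d) - x (snd d))\<^sup>2)"
    unfolding sum_negf[symmetric]
    by (intro sum.cong) (simp_all add: f_def w_def cos_sym power2_eq_square algebra_simps)
  finally show ?thesis using quad by simp
qed

lemma stable_if_cos_nonneg:
  assumes "K > 0" and cos: "\<And>a b. adj a b \<Longrightarrow> 0 \<le> cos (\<theta> a - \<theta> b)"
  shows "stable n adj K \<theta>"
  unfolding stable_def stab_matrix_quadratic_form
  using assms by (auto intro!: sum_nonneg simp: in_darts_iff)

lemma fixed_point_of_angle_flow: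
  assumes dom: "\<epsilon> \<in> domain_D adj Fout F c"
    and Delta: "\<And>d. d \<in> D \<Longrightarrow> Delta \<theta> (fst d) (snd d) = angle_flow \<epsilon> d"
  shows "fixed_point n adj \<theta>"
  unfolding fixed_point_def
proof
  fix i
  have "sin (\<theta> i - \<theta> j) = dual_grad (face_potential \<epsilon>) (i, j)" if "j \<in> nbrs adj i" for j
  proof -
    have ij: "(i, j) \<in> D" using that by (simp add: in_nbrs_iff in_darts_iff)
    have "sin (\<theta> i - \<theta> j) = sin (angle_flow \<epsilon> (i, j))"
      using Delta[OF ij] unfolding Delta_def by (metis fst_conv snd_conv sin_wrap)
    then show ?thesis using sin_angle_flow[OF dom ij] ij by (simp add: dual_grad_def)
  qed
  then have "(\<Sum>j\<in>nbrs adj i. sin (\<theta> i - \<theta> j)) = divergence (dual_grad (face_potential \<epsilon>)) i"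
    unfolding divergence_def by simp
  then show "(\<Sum>j\<in>nbrs adj i. sin (\<theta> i - \<theta> j)) = 0" by (simp add: divergence_dual_grad)
qed

text \<open>Integer flows realise every integer circulation vector: crossing from the face of a
  dart to the face of its reverse, adding the unit flow of the reverse dart moves a unit of
  circulation between the two faces.\<close>

lemma integer_flow_unit_circulation:
  assumes k: "k \<in> {1..c}"
  obtains w where "is_flow w" "\<And>d. w d \<in> \<int>" "\<And>j. j \<in> {1..c} \<Longrightarrow> (\<Sum>d\<in>F j. w d) = (if j = k then 1 else 0)"
proof -
  let ?P = "\<lambda>g. \<exists>w. is_flow w \<and> (\<forall>d. w d \<in> \<int>)
    \<and> (\<forall>j\<in>{1..c}. (\<Sum>d\<in>F j. w d) = (if F j = g then 1 else 0))"
  obtain d0 where d0: "d0 \<in> D" "F k = face d0" using F_eq_face[OF k] by blast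
  have "?P (face d0)"
  proof (rule face_induct[OF _ _ d0(1)])
    show "?P Fout" using F_neq_Fout by (intro exI[of _ "\<lambda>_. 0"]) (auto intro: is_flowI)
  next
    fix d assume d: "d \<in> D" and "?P (face d)"
    then obtain w where w: "is_flow w" "\<forall>x. w x \<in> \<int>"
      "\<forall>j\<in>{1..c}. (\<Sum>x\<in>F j. w x) = (if F j = face d then 1 else 0)" by blast
    have "is_flow (\<lambda>x. w x + unit_flow (prod.swap d) x)"
      using is_flow_add[OF w(1) is_flow_unit_flow] d by simp
    moreover have "\<forall>x. w x + unit_flow (prod.swap d) x \<in> \<int>"
      using w(2) by (simp add: unit_flow_def)
    moreover have "(\<Sum>x\<in>F j. w x + unit_flow (prod.swap d) x) = (if F j = face (prod.swap d) then 1 else 0)"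
      if j: "j \<in> {1..c}" for j
    proof -
      have "(\<Sum>x\<in>F j. unit_flow (prod.swap d) x)
          = (if prod.swap d \<in> F j then 1 else 0) - (if d \<in> F j then 1 else 0)"
        using finite_F[OF j] by (simp add: unit_flow_def sum_subtractf sum.delta')
      also have "prod.swap d \<in> F j \<longleftrightarrow> F j = face (prod.swap d)" using mem_F_iff[OF j] d by auto
      also have "d \<in> F j \<longleftrightarrow> F j = face d" using mem_F_iff[OF j] d by auto
      finally show ?thesis using w(3) j by (auto simp: sum.distrib)
    qed
    ultimately show "?P (face (prod.swap d))" by blast
  qed
  then obtain w where "is_flow w" "\<forall>d. w d \<in> \<int>"
      "\<forall>j\<in>{1..c}. (\<Sum>d\<in>F j. w d) = (if F j = F k then 1 else 0)"
    using d0(2) by auto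
  then show ?thesis using that F_eq_iff[OF _ k] by auto
qed

lemma integer_flow_circulation:
  fixes q :: "nat \<Rightarrow> int"
  obtains w where "is_flow w" "\<And>d. w d \<in> \<int>" "\<And>j. j \<in> {1..c} \<Longrightarrow> (\<Sum>d\<in>F j. w d) = of_int (q j)"
proof -
  have "\<forall>k\<in>{1..c}. \<exists>w. is_flow w \<and> (\<forall>d. w d \<in> \<int>)
      \<and> (\<forall>j\<in>{1..c}. (\<Sum>d\<in>F j. w d) = (if j = k then 1 else 0))"
    using integer_flow_unit_circulation by metis
  then obtain W where W: "\<And>k. k \<in> {1..c} \<Longrightarrow> is_flow (W k)" "\<And>k d. k \<in> {1..c} \<Longrightarrow> W k d \<in> \<int>"
      "\<And>k j. k \<in> {1..c} \<Longrightarrow> j \<in> {1..c} \<Longrightarrow> (\<Sum>d\<in>F j. W k d) = (if j = k then 1 else 0)"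
    by metis
  define w where "w d = (\<Sum>k\<in>{1..c}. of_int (q k) * W k d)" for d
  show ?thesis
  proof (rule that[of w])
    show "is_flow w" unfolding w_def[abs_def] by (rule is_flow_sum) (simp_all add: W(1))
    show "w d \<in> \<int>" for d unfolding w_def by (intro Ints_sum Ints_mult) (simp_all add: W(2))
    show "(\<Sum>d\<in>F j. w d) = of_int (q j)" if j: "j \<in> {1..c}" for j
    proof -
      have "(\<Sum>d\<in>F j. w d) = (\<Sum>k\<in>{1..c}. of_int (q k) * (\<Sum>d\<in>F j. W k d))"
        unfolding w_def by (simp add: sum_distrib_left sum.swap[of _ "F j"])
      also have "\<dots> = (\<Sum>k\<in>{1..c}. if k = j then of_int (q k) else 0)"
        using W(3) j by (intro sum.cong) auto
      finally show ?thesis using j by simp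
    qed
  qed
qed

text \<open>The angle flow has circulation \<open>2\<pi>q\<^sub>k\<close> around \<open>F k\<close>; subtracting \<open>2\<pi>\<close> times
  an integer flow with circulations \<open>q\<^sub>k\<close> leaves a flow without circulation, i.e. a gradient,
  which differs from the angle flow by multiples of \<open>2\<pi>\<close> only.\<close>

lemma exists_config_angle_flow:
  assumes \<epsilon>: "\<epsilon> \<in> calQ adj Fout F c q"
  obtains \<theta> where "\<And>d. d \<in> D \<Longrightarrow> Delta \<theta> (fst d) (snd d) = angle_flow \<epsilon> d"
proof -
  have dom: "\<epsilon> \<in> domain_D adj Fout F c" using \<epsilon> by (simp add: calQ_def)
  obtain w where w: "is_flow w" "\<And>d. w d \<in> \<int>" "\<And>j. j \<in> {1..c} \<Longrightarrow> (\<Sum>d\<in>F j. w d) = of_int (q j)"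
    using integer_flow_circulation[of q] by blast
  define \<omega> where "\<omega> d = (if d \<in> D then angle_flow \<epsilon> d else 0) - 2 * pi * w d" for d
  have "is_flow \<omega>"
  proof (rule is_flowI)
    show "\<omega> d = 0" if "d \<notin> D" for d using that is_flow_outside[OF w(1)] by (simp add: \<omega>_def)
    show "\<omega> (prod.swap d) = - \<omega> d" for d
      using angle_flow_swap[OF dom] is_flow_swap[OF w(1)] by (simp add: \<omega>_def)
  qed
  moreover have "(\<Sum>d\<in>F k. \<omega> d) = 0" if k: "k \<in> {1..c}" for k
  proof -
    have "(\<Sum>d\<in>F k. \<omega> d) = (\<Sum>d\<in>F k. angle_flow \<epsilon> d) - 2 * pi * (\<Sum>d\<in>F k. w d)"
      using mem_F_iff[OF k] by (simp add: \<omega>_def sum_subtractf sum_distrib_left)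
    then show ?thesis using face_sum_angle_flow[OF k] w(3)[OF k] \<epsilon> k by (simp add: calQ_def)
  qed
  ultimately obtain \<theta> where \<theta>: "\<And>d. d \<in> D \<Longrightarrow> \<omega> d = \<theta> (fst d) - \<theta> (snd d)"
    using zero_circulation_flow_eq_grad by blast
  have "Delta \<theta> (fst d) (snd d) = angle_flow \<epsilon> d" if d: "d \<in> D" for d
  proof -
    obtain z where z: "w d = of_int z" using w(2)[of d] Ints_cases by metis
    have "Delta \<theta> (fst d) (snd d) = wrap (angle_flow \<epsilon> d + 2 * pi * of_int (- z))"
      using \<theta>[OF d] d z by (simp add: Delta_def \<omega>_def)
    also have "\<dots> = angle_flow \<epsilon> d"
      using angle_flow_bounds[OF dom d] pi_gt_zero by (simp only: wrap_add_multiple) (intro wrap_eq_self; linarith)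
    finally show ?thesis .
  qed
  then show ?thesis by (rule that)
qed

lemma cfg_equiv_of_Delta_eq:
  assumes Delta: "\<And>d. d \<in> D \<Longrightarrow> Delta \<theta>' (fst d) (snd d) = Delta \<theta> (fst d) (snd d)"
  shows "cfg_equiv n \<theta> \<theta>'"
proof -
  define g where "g v = \<theta>' v - \<theta> v" for v
  have step: "\<exists>z::int. g a - g b = 2 * pi * of_int z" if "adj a b" for a b
  proof -
    have "wrap (\<theta>' a - \<theta>' b) = wrap (\<theta> a - \<theta> b)"
      using Delta[of "(a, b)"] that by (simp add: Delta_def in_darts_iff)
    then obtain z :: int where "(\<theta>' a - \<theta>' b) - (\<theta> a - \<theta> b) = 2 * pi * of_int z"
      by (rule wrap_eq_imp_diff)
    then show ?thesis by (intro exI[of _ z]) (simp add: g_def algebra_simps)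
  qed
  have g_period: "\<exists>z::int. g v = g 1 + 2 * pi * of_int z" if v: "v \<in> {1..n}" for v
  proof (rule connected_induct[OF _ _ v])
    show "\<exists>z::int. g 1 = g 1 + 2 * pi * of_int z" by (intro exI[of _ 0]) simp
  next
    fix a b assume "adj a b" and "\<exists>z::int. g a = g 1 + 2 * pi * of_int z"
    then obtain z1 z2 :: int where "g a = g 1 + 2 * pi * of_int z1" "g a - g b = 2 * pi * of_int z2"
      using step by blast
    then have "g b = g 1 + 2 * pi * of_int (z1 - z2)" by (simp add: algebra_simps)
    then show "\<exists>z::int. g b = g 1 + 2 * pi * of_int z" by blast
  qed
  then show ?thesis unfolding cfg_equiv_def
  proof (intro exI[of _ "g 1"] ballI)
    fix i assume "i \<in> {1..n}"
    then obtain z :: int where "g i = g 1 + 2 * pi * of_int z" using g_period by blast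
    then show "\<exists>z::int. \<theta>' i = \<theta> i + g 1 + 2 * pi * of_int z" by (auto simp: g_def algebra_simps)
  qed
qed

lemma Delta_eq_of_cfg_equiv:
  assumes "cfg_equiv n \<theta> \<theta>'" and d: "d \<in> D"
  shows "Delta \<theta>' (fst d) (snd d) = Delta \<theta> (fst d) (snd d)"
proof -
  obtain C where C: "\<forall>i\<in>{1..n}. \<exists>z::int. \<theta>' i = \<theta> i + C + 2 * pi * of_int z"
    using assms(1) unfolding cfg_equiv_def by blast
  have "fst d \<in> {1..n}" "snd d \<in> {1..n}" using d adj_bounds by (auto simp: in_darts_iff)
  then obtain za zb :: int where "\<theta>' (fst d) = \<theta> (fst d) + C + 2 * pi * of_int za"
      "\<theta>' (snd d) = \<theta> (snd d) + C + 2 * pi * of_int zb"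
    using C by blast
  then have "\<theta>' (fst d) - \<theta>' (snd d) = (\<theta> (fst d) - \<theta> (snd d)) + 2 * pi * of_int (za - zb)"
    by (simp add: algebra_simps)
  then show ?thesis unfolding Delta_def by (metis wrap_add_multiple)
qed

lemma winding_eq: "winding F \<theta> k = (\<Sum>d\<in>F k. Delta \<theta> (fst d) (snd d)) / (2 * pi)"
  by (simp add: winding_def case_prod_unfold)

lemma stable_fixed_point_of_angle_flow:
  assumes K: "K > 0" and \<epsilon>: "\<epsilon> \<in> calQ adj Fout F c q"
    and Delta: "\<And>d. d \<in> D \<Longrightarrow> Delta \<theta> (fst d) (snd d) = angle_flow \<epsilon> d"
  shows "fixed_point n adj \<theta> \<and> stable n adj K \<theta> \<and> angles_bounded adj \<theta> \<and> has_winding c F \<theta> q"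
proof -
  have dom: "\<epsilon> \<in> domain_D adj Fout F c" using \<epsilon> by (simp add: calQ_def)
  have bounds: "- (pi / 2) \<le> Delta \<theta> a b \<and> Delta \<theta> a b \<le> pi / 2" if "adj a b" for a b
    using Delta[of "(a, b)"] angle_flow_bounds[OF dom, of "(a, b)"] that by (simp add: in_darts_iff)
  have "stable n adj K \<theta>"
  proof (rule stable_if_cos_nonneg[OF K])
    fix a b assume "adj a b"
    then show "0 \<le> cos (\<theta> a - \<theta> b)" using bounds cos_ge_zero by (metis Delta_def cos_wrap)
  qed
  moreover have "has_winding c F \<theta> q" unfolding has_winding_def
  proof
    fix k assume k: "k \<in> {1..c}"
    have "(\<Sum>d\<in>F k. Delta \<theta> (fst d) (snd d)) = (\<Sum>d\<in>F k. angle_flow \<epsilon> d)"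
      using mem_F_iff[OF k] Delta by (intro sum.cong) auto
    also have "\<dots> = 2 * pi * of_int (q k)" using face_sum_angle_flow[OF k] \<epsilon> k by (simp add: calQ_def)
    finally show "winding F \<theta> k = of_int (q k)" unfolding winding_eq by simp
  qed
  ultimately show ?thesis
    using fixed_point_of_angle_flow[OF dom Delta] bounds by (simp add: angles_bounded_def)
qed

text \<open>Conversely, at a fixed point the flow \<open>sin \<Delta>\<close> is divergence free, hence the dual
  gradient of a face potential \<open>\<epsilon>\<close>; when all \<open>|\<Delta>| \<le> \<pi>/2\<close>, \<open>\<Delta> = arcsin (sin \<Delta>)\<close> recovers the
  angle flow of \<open>\<epsilon>\<close>.\<close>

lemma angle_flow_of_bounded_fixed_point:
  assumes fp: "fixed_point n adj \<theta>" and bounded: "angles_bounded adj \<theta>"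
  obtains \<epsilon> where "\<epsilon> \<in> domain_D adj Fout F c"
    and "\<And>d. d \<in> D \<Longrightarrow> Delta \<theta> (fst d) (snd d) = angle_flow \<epsilon> d"
proof -
  define z where "z d = (if d \<in> D then sin (\<theta> (fst d) - \<theta> (snd d)) else 0)" for d
  have "is_flow z"
  proof (rule is_flowI)
    show "z (prod.swap d) = - z d" for d
      by (simp add: z_def) (metis minus_diff_eq sin_minus)
  qed (simp add: z_def)
  moreover have "divergence z v = 0" for v
  proof (cases "v \<in> {1..n}")
    case True
    have "divergence z v = (\<Sum>u\<in>nbrs adj v. sin (\<theta> v - \<theta> u))"
      unfolding divergence_def by (intro sum.cong) (simp_all add: z_def in_nbrs_iff in_darts_iff)
    then show ?thesis using fp True unfolding fixed_point_def by simp
  qed (simp add: divergence_def nbrs_empty)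
  ultimately obtain a where a: "\<And>d. z d = dual_grad (face_potential a) d"
    using divergence_free_flow_eq_dual_grad by blast
  define \<epsilon> where "\<epsilon> k = (if k \<in> {1..c} then a k else 0)" for k
  have sin_Delta: "sin (Delta \<theta> (fst d) (snd d)) = face_potential \<epsilon> (face d) - face_potential \<epsilon> (face (prod.swap d))"
    if d: "d \<in> D" for d
    using a[of d] d face_potential_cong[of \<epsilon> a] by (simp add: Delta_def z_def dual_grad_def \<epsilon>_def)
  have "\<epsilon> \<in> domain_D adj Fout F c"
  proof (rule domain_D_of_face_potential_diff_bounded)
    show "\<epsilon> k = 0" if "k \<notin> {1..c}" for k using that unfolding \<epsilon>_def by argo
    show "\<bar>face_potential \<epsilon> (face d) - face_potential \<epsilon> (face (prod.swap d))\<bar> \<le> 1" if "d \<in> D" for d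
      using sin_Delta[OF that] abs_sin_le_one by metis
  qed
  moreover have "Delta \<theta> (fst d) (snd d) = angle_flow \<epsilon> d" if d: "d \<in> D" for d
  proof -
    have "- (pi / 2) \<le> Delta \<theta> (fst d) (snd d) \<and> Delta \<theta> (fst d) (snd d) \<le> pi / 2"
      using bounded d unfolding angles_bounded_def in_darts_iff by blast
    then have "arcsin (sin (Delta \<theta> (fst d) (snd d))) = Delta \<theta> (fst d) (snd d)" by (intro arcsin_sin) auto
    then show ?thesis using sin_Delta[OF d] by (simp add: angle_flow_def)
  qed
  ultimately show ?thesis by (rule that)
qed

lemma angle_flow_inj:
  assumes dom: "\<epsilon>1 \<in> domain_D adj Fout F c" "\<epsilon>2 \<in> domain_D adj Fout F c"
    and eq: "\<And>d. d \<in> D \<Longrightarrow> angle_flow \<epsilon>1 d = angle_flow \<epsilon>2 d"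
  shows "\<epsilon>1 = \<epsilon>2"
proof
  fix k
  define L where "L g = face_potential \<epsilon>1 g - face_potential \<epsilon>2 g" for g
  have "dual_grad L d = 0" if d: "d \<in> D" for d
    using eq[OF d] sin_angle_flow[OF dom(1) d] sin_angle_flow[OF dom(2) d] d
    by (simp add: dual_grad_def L_def)
  moreover have "L Fout = 0" by (simp add: L_def face_potential_Fout)
  ultimately have L_face: "L (face d) = 0" if "d \<in> D" for d
    using dual_grad_eq_zero_imp that by blast
  show "\<epsilon>1 k = \<epsilon>2 k"
  proof (cases "k \<in> {1..c}")
    case True
    then obtain d where "d \<in> D" "F k = face d" using F_eq_face by blast
    with L_face True show ?thesis by (metis L_def eq_iff_diff_eq_0 face_potential_F)
  qed (use dom in \<open>simp add: domain_D_def\<close>)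
qed

lemma edge_cond_set_eq_class:
  assumes \<epsilon>: "\<epsilon> \<in> calQ adj Fout F c q" and \<theta>0: "edge_cond Fout F c \<epsilon> \<theta>0"
  shows "{\<theta>. edge_cond Fout F c \<epsilon> \<theta>} = cfg_rel n `` {\<theta>0}"
proof -
  have dom: "\<epsilon> \<in> domain_D adj Fout F c" using \<epsilon> by (simp add: calQ_def)
  have "edge_cond Fout F c \<epsilon> \<theta> \<longleftrightarrow> (\<forall>d\<in>D. Delta \<theta> (fst d) (snd d) = Delta \<theta>0 (fst d) (snd d))" for \<theta>
    using \<theta>0 edge_cond_iff[OF dom] by auto
  also have "\<dots> \<theta> \<longleftrightarrow> cfg_equiv n \<theta>0 \<theta>" for \<theta>
    using cfg_equiv_of_Delta_eq Delta_eq_of_cfg_equiv by blast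
  finally show ?thesis by (auto simp: cfg_rel_def)
qed

lemma edge_cond_of_bounded_fixed_point:
  assumes "fixed_point n adj \<theta>" "angles_bounded adj \<theta>" and winding: "has_winding c F \<theta> q"
  obtains \<epsilon> where "\<epsilon> \<in> calQ adj Fout F c q" "edge_cond Fout F c \<epsilon> \<theta>"
proof -
  obtain \<epsilon> where dom: "\<epsilon> \<in> domain_D adj Fout F c"
    and Delta: "\<And>d. d \<in> D \<Longrightarrow> Delta \<theta> (fst d) (snd d) = angle_flow \<epsilon> d"
    using angle_flow_of_bounded_fixed_point[OF assms(1,2)] by blast
  have "calA adj Fout F c \<epsilon> k = 2 * pi * of_int (q k)" if k: "k \<in> {1..c}" for k
  proof -
    have "calA adj Fout F c \<epsilon> k = (\<Sum>d\<in>F k. Delta \<theta> (fst d) (snd d))"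
      using face_sum_angle_flow[OF k] mem_F_iff[OF k] Delta by (auto intro!: sum.cong)
    also have "\<dots> = 2 * pi * winding F \<theta> k" by (simp add: winding_eq)
    finally show ?thesis using winding k by (simp add: has_winding_def)
  qed
  with dom have "\<epsilon> \<in> calQ adj Fout F c q" by (simp add: calQ_def)
  moreover have "edge_cond Fout F c \<epsilon> \<theta>" using Delta edge_cond_iff[OF dom] by blast
  ultimately show ?thesis by (rule that)
qed

lemma exists_edge_cond:
  assumes \<epsilon>: "\<epsilon> \<in> calQ adj Fout F c q" shows "\<exists>\<theta>. edge_cond Fout F c \<epsilon> \<theta>"
proof -
  have dom: "\<epsilon> \<in> domain_D adj Fout F c" using \<epsilon> by (simp add: calQ_def)
  obtain \<theta> where "\<And>d. d \<in> D \<Longrightarrow> Delta \<theta> (fst d) (snd d) = angle_flow \<epsilon> d"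
    using exists_config_angle_flow[OF \<epsilon>] by blast
  then show ?thesis using edge_cond_iff[OF dom] by blast
qed

lemma stable_fixed_point_of_edge_cond:
  assumes "K > 0" and \<epsilon>: "\<epsilon> \<in> calQ adj Fout F c q" and "edge_cond Fout F c \<epsilon> \<theta>"
  shows "fixed_point n adj \<theta> \<and> stable n adj K \<theta> \<and> angles_bounded adj \<theta> \<and> has_winding c F \<theta> q"
proof -
  have dom: "\<epsilon> \<in> domain_D adj Fout F c" using \<epsilon> by (simp add: calQ_def)
  show ?thesis
    using stable_fixed_point_of_angle_flow[OF assms(1) \<epsilon>] edge_cond_iff[OF dom] assms(3) by blast
qed

lemma inj_on_edge_cond_sets: "inj_on (\<lambda>\<epsilon>. {\<theta>. edge_cond Fout F c \<epsilon> \<theta>}) (calQ adj Fout F c q)"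
proof (rule inj_onI)
  fix \<epsilon>1 \<epsilon>2 assume \<epsilon>: "\<epsilon>1 \<in> calQ adj Fout F c q" "\<epsilon>2 \<in> calQ adj Fout F c q"
    and eq: "{\<theta>. edge_cond Fout F c \<epsilon>1 \<theta>} = {\<theta>. edge_cond Fout F c \<epsilon>2 \<theta>}"
  have dom: "\<epsilon>1 \<in> domain_D adj Fout F c" "\<epsilon>2 \<in> domain_D adj Fout F c" using \<epsilon> by (simp_all add: calQ_def)
  obtain \<theta> where "edge_cond Fout F c \<epsilon>1 \<theta>" "edge_cond Fout F c \<epsilon>2 \<theta>"
    using exists_edge_cond[OF \<epsilon>(1)] eq by blast
  then show "\<epsilon>1 = \<epsilon>2" using angle_flow_inj[OF dom] edge_cond_iff[OF dom(1)] edge_cond_iff[OF dom(2)] by metis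
qed

lemma edge_cond_sets_eq_quotient:
  fixes K :: real and q :: "nat \<Rightarrow> int"
  assumes "K > 0"
  defines "S \<equiv> {\<theta>. fixed_point n adj \<theta> \<and> stable n adj K \<theta> \<and> angles_bounded adj \<theta> \<and> has_winding c F \<theta> q}"
  shows "(\<lambda>\<epsilon>. {\<theta>. edge_cond Fout F c \<epsilon> \<theta>}) ` calQ adj Fout F c q = S // cfg_rel n"
proof
  show "(\<lambda>\<epsilon>. {\<theta>. edge_cond Fout F c \<epsilon> \<theta>}) ` calQ adj Fout F c q \<subseteq> S // cfg_rel n"
  proof
    fix X assume "X \<in> (\<lambda>\<epsilon>. {\<theta>. edge_cond Fout F c \<epsilon> \<theta>}) ` calQ adj Fout F c q"
    then obtain \<epsilon> where \<epsilon>: "\<epsilon> \<in> calQ adj Fout F c q" and X: "X = {\<theta>. edge_cond Fout F c \<epsilon> \<theta>}"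
      by blast
    obtain \<theta> where \<theta>: "edge_cond Fout F c \<epsilon> \<theta>" using exists_edge_cond[OF \<epsilon>] by blast
    then have "\<theta> \<in> S" using stable_fixed_point_of_edge_cond[OF assms(1) \<epsilon>] by (simp add: S_def)
    with \<epsilon> \<theta> X show "X \<in> S // cfg_rel n" using edge_cond_set_eq_class by (simp add: quotientI)
  qed
  show "S // cfg_rel n \<subseteq> (\<lambda>\<epsilon>. {\<theta>. edge_cond Fout F c \<epsilon> \<theta>}) ` calQ adj Fout F c q"
  proof
    fix X assume "X \<in> S // cfg_rel n"
    then obtain \<theta> where "\<theta> \<in> S" and X: "X = cfg_rel n `` {\<theta>}" by (auto elim: quotientE)
    then obtain \<epsilon> where "\<epsilon> \<in> calQ adj Fout F c q" "edge_cond Fout F c \<epsilon> \<theta>"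
      using edge_cond_of_bounded_fixed_point unfolding S_def by blast
    then show "X \<in> (\<lambda>\<epsilon>. {\<theta>. edge_cond Fout F c \<epsilon> \<theta>}) ` calQ adj Fout F c q"
      using X edge_cond_set_eq_class by blast
  qed
qed

theorem kuramoto_fixed_points_correspondence:
  fixes K :: real and q :: "nat \<Rightarrow> int"
  assumes "K > 0"
  defines "S \<equiv> {\<theta>. fixed_point n adj \<theta> \<and> stable n adj K \<theta> \<and> angles_bounded adj \<theta> \<and> has_winding c F \<theta> q}"
  shows "(\<forall>\<epsilon>\<in>calQ adj Fout F c q. \<exists>\<theta>. edge_cond Fout F c \<epsilon> \<theta> \<and>
            (\<forall>\<theta>'. edge_cond Fout F c \<epsilon> \<theta>' \<longrightarrow> cfg_equiv n \<theta> \<theta>'))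
       \<and> (\<forall>\<epsilon>\<in>calQ adj Fout F c q. \<forall>\<theta>. edge_cond Fout F c \<epsilon> \<theta> \<longrightarrow> \<theta> \<in> S)
       \<and> bij_betw (\<lambda>\<epsilon>. {\<theta>. edge_cond Fout F c \<epsilon> \<theta>}) (calQ adj Fout F c q) (S // cfg_rel n)"
proof (intro conjI ballI allI impI)
  fix \<epsilon> assume \<epsilon>: "\<epsilon> \<in> calQ adj Fout F c q"
  obtain \<theta> where \<theta>: "edge_cond Fout F c \<epsilon> \<theta>" using exists_edge_cond[OF \<epsilon>] by blast
  with edge_cond_set_eq_class[OF \<epsilon> \<theta>]
  show "\<exists>\<theta>. edge_cond Fout F c \<epsilon> \<theta> \<and> (\<forall>\<theta>'. edge_cond Fout F c \<epsilon> \<theta>' \<longrightarrow> cfg_equiv n \<theta> \<theta>')"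
    by (auto simp: cfg_rel_def)
next
  show "\<theta> \<in> S" if "\<epsilon> \<in> calQ adj Fout F c q" "edge_cond Fout F c \<epsilon> \<theta>" for \<epsilon> \<theta>
    using stable_fixed_point_of_edge_cond[OF assms(1) that] by (simp add: S_def)
next
  show "bij_betw (\<lambda>\<epsilon>. {\<theta>. edge_cond Fout F c \<epsilon> \<theta>}) (calQ adj Fout F c q) (S // cfg_rel n)"
    using inj_on_edge_cond_sets edge_cond_sets_eq_quotient[OF assms(1)] by (simp add: bij_betw_def S_def)
qed

end

text \<open>Without edges the graph is a single vertex and there are no bounded faces: \<open>\<Q>(q)\<close> is
  the single zero vector and all configurations are equivalent stable fixed points.\<close>

lemma kuramoto_fixed_points_no_edges:
  fixes K :: real and q :: "nat \<Rightarrow> int"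
  assumes "connected_graph n adj" and "plane_embedding n adj rot Fout c F" and "darts adj = {}"
  defines "S \<equiv> {\<theta>. fixed_point n adj \<theta> \<and> stable n adj K \<theta> \<and> angles_bounded adj \<theta> \<and> has_winding c F \<theta> q}"
  shows "(\<forall>\<epsilon>\<in>calQ adj Fout F c q. \<exists>\<theta>. edge_cond Fout F c \<epsilon> \<theta> \<and>
            (\<forall>\<theta>'. edge_cond Fout F c \<epsilon> \<theta>' \<longrightarrow> cfg_equiv n \<theta> \<theta>'))
       \<and> (\<forall>\<epsilon>\<in>calQ adj Fout F c q. \<forall>\<theta>. edge_cond Fout F c \<epsilon> \<theta> \<longrightarrow> \<theta> \<in> S)
       \<and> bij_betw (\<lambda>\<epsilon>. {\<theta>. edge_cond Fout F c \<epsilon> \<theta>}) (calQ adj Fout F c q) (S // cfg_rel n)"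
proof -
  have no_adj: "\<not> adj a b" for a b using assms(3) by (auto simp: darts_def)
  have n: "n = 1"
  proof -
    have "(1, 2) \<notin> {(x, y). adj x y}\<^sup>*" using no_adj by simp
    then show ?thesis using assms(1) unfolding connected_graph_def by force
  qed
  have c: "c = 0" using assms(2) no_adj n by (simp add: plane_embedding_def edges_def)
  have nbrs: "nbrs adj i = {}" for i using no_adj by (simp add: nbrs_def)
  have Q: "calQ adj Fout F c q = {\<lambda>_. 0}" using c by (auto simp: calQ_def domain_D_def)
  have edge_cond: "edge_cond Fout F c \<epsilon> \<theta>" for \<epsilon> \<theta> using c by (simp add: edge_cond_def)
  have equiv: "cfg_equiv n \<theta> \<theta>'" for \<theta> \<theta>'
    unfolding cfg_equiv_def n by (intro exI[of _ "\<theta>' 1 - \<theta> 1"]) (auto intro: exI[of _ 0])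
  have "S = UNIV"
    using c n nbrs no_adj
    by (auto simp: S_def fixed_point_def stable_def stab_matrix_def angles_bounded_def has_winding_def)
  moreover have "cfg_rel n `` {\<theta>} = UNIV" for \<theta> using equiv by (auto simp: cfg_rel_def)
  ultimately have "S // cfg_rel n = {UNIV}" unfolding quotient_def by auto
  then show ?thesis unfolding Q using edge_cond equiv \<open>S = UNIV\<close> by (simp add: bij_betw_def)
qed

theorem proposition1:
  fixes n c :: nat and adj :: "nat \<Rightarrow> nat \<Rightarrow> bool" and rot :: "nat \<Rightarrow> nat \<Rightarrow> nat"
    and Fout :: "(nat \<times> nat) set" and F :: "nat \<Rightarrow> (nat \<times> nat) set"
    and K :: real and q :: "nat \<Rightarrow> int"
  assumes "simple_graph n adj"
    and "connected_graph n adj"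
    and "every_edge_on_cycle adj"
    and "rotation_system n adj rot"
    and "plane_embedding n adj rot Fout c F"
    and "K > 0"
  defines "S \<equiv> {\<theta>. fixed_point n adj \<theta> \<and> stable n adj K \<theta> \<and> angles_bounded adj \<theta>
                     \<and> has_winding c F \<theta> q}"
  shows "(\<forall>\<epsilon>\<in>calQ adj Fout F c q. \<exists>\<theta>. edge_cond Fout F c \<epsilon> \<theta> \<and>
            (\<forall>\<theta>'. edge_cond Fout F c \<epsilon> \<theta>' \<longrightarrow> cfg_equiv n \<theta> \<theta>'))
       \<and> (\<forall>\<epsilon>\<in>calQ adj Fout F c q. \<forall>\<theta>. edge_cond Fout F c \<epsilon> \<theta> \<longrightarrow> \<theta> \<in> S)
       \<and> bij_betw (\<lambda>\<epsilon>. {\<theta>. edge_cond Fout F c \<epsilon> \<theta>}) (calQ adj Fout F c q) (S // cfg_rel n)"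
proof (cases "darts adj = {}")
  case True
  then show ?thesis unfolding S_def by (rule kuramoto_fixed_points_no_edges[OF assms(2,5)])
next
  case False
  interpret plane_graph n c adj rot Fout F
    using assms(1-5) False by unfold_locales
  show ?thesis unfolding S_def by (rule kuramoto_fixed_points_correspondence[OF assms(6)])
qed

end
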